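(* There exists a speedable number that is not regainingly approximable.
   Context: A real $x$ is regainingly approximable if there is a computable non-decreasing sequence of rationals $(x_n)_n$ converging to $x$ with $x - x_n < 2^{-n}$ for infinitely many $n\in\mathbb{N}$. A left-computable real $x$ (i.e. limit of a computable non-decreasing sequence of rationals) is speedable if there exist $\rho\in(0,1)$ and a computable strictly increasing sequence of rationals $(x_n)_n$ converging to $x$ such that $\frac{x-x_{n+1}}{x-x_n}\le\rho$ for infinitely many $n\in\mathbb{N}$. *)

theory Defs
  imports Complex_Main
begin

datatype recf =
    Zr
  | Sc
  | Proj nat
  | Cn recf "recf list"
  | Pr recf recf
  | Mn recf

inductive eval :: "recf \<Rightarrow> nat list \<Rightarrow> nat \<Rightarrow> bool" where
  eval_Zr: "eval Zr xs 0"
| eval_Sc: "eval Sc (x # xs) (Suc x)"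
| eval_Proj: "i < length xs \<Longrightarrow> eval (Proj i) xs (xs ! i)"
| eval_Cn: "list_all2 (\<lambda>g y. eval g xs y) gs ys \<Longrightarrow> eval f ys z \<Longrightarrow> eval (Cn f gs) xs z"
| eval_Pr0: "eval f xs y \<Longrightarrow> eval (Pr f g) (0 # xs) y"
| eval_PrS: "eval (Pr f g) (n # xs) y \<Longrightarrow> eval g (n # y # xs) z \<Longrightarrow> eval (Pr f g) (Suc n # xs) z"
| eval_Mn: "eval f (n # xs) 0 \<Longrightarrow> (\<forall>m<n. \<exists>y. eval f (m # xs) (Suc y)) \<Longrightarrow> eval (Mn f) xs n"

definition computable_fun :: "(nat \<Rightarrow> nat) \<Rightarrow> bool" where
  "computable_fun g \<longleftrightarrow> (\<exists>t. \<forall>n. eval t [n] (g n))"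

definition computable_rat_seq :: "(nat \<Rightarrow> rat) \<Rightarrow> bool" where
  "computable_rat_seq q \<longleftrightarrow> (\<exists>a b c. computable_fun a \<and> computable_fun b \<and> computable_fun c \<and>
     (\<forall>n. q n = (of_nat (a n) - of_nat (b n)) / of_nat (Suc (c n))))"

definition left_computable :: "real \<Rightarrow> bool" where
  "left_computable x \<longleftrightarrow> (\<exists>q. computable_rat_seq q \<and> mono q \<and>
     (\<lambda>n. real_of_rat (q n)) \<longlonglongrightarrow> x)"

definition regainingly_approximable :: "real \<Rightarrow> bool" where
  "regainingly_approximable x \<longleftrightarrow> (\<exists>q. computable_rat_seq q \<and> mono q \<and>
     (\<lambda>n. real_of_rat (q n)) \<longlonglongrightarrow> x \<and>
     (\<exists>\<^sub>F n in sequentially. x - real_of_rat (q n) < 2 powi (- int n)))"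

definition speedable :: "real \<Rightarrow> bool" where
  "speedable x \<longleftrightarrow> left_computable x \<and>
     (\<exists>\<rho>::real. 0 < \<rho> \<and> \<rho> < 1 \<and> (\<exists>q. computable_rat_seq q \<and> strict_mono q \<and>
        (\<lambda>n. real_of_rat (q n)) \<longlonglongrightarrow> x \<and>
        (\<exists>\<^sub>F n in sequentially.
           (x - real_of_rat (q (Suc n))) / (x - real_of_rat (q n)) \<le> \<rho>)))"

end

theory Submission
  imports Defs "HOL-Library.Nat_Bijection"
begin

text \<open>The real is the limit of the increasing computable sequence \<open>N s / 4^s\<close>.
  Stage \<open>s\<close> adds \<open>2^-(2s + 1)\<close>, and requirement \<open>(e, k)\<close>, of level \<open>l = 2^(e + 1) (2k + 1)\<close>,
  adds \<open>2^-l\<close> as soon as it sees the \<open>e\<close>-th computable rational sequence \<open>q\<close> at position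
  \<open>m = 2^(e + 1) (2k + 3)\<close> within \<open>2^-(l + 1)\<close> of the current approximation. From then on the
  limit exceeds \<open>q m\<close>, and hence, when \<open>q\<close> increases, every \<open>q n\<close> with \<open>l < n \<le> m\<close>, by at
  least \<open>2^-(l + 1) \<ge> 2^-n\<close>; these intervals cover all large \<open>n\<close>, so \<open>q\<close> does not regain.
  A requirement acts at most once, so different stages use disjoint sets of levels and the limit
  is at most \<open>1\<close>; a stage whose least level is minimal among all later stages therefore adds
  at least as much as all later stages together, which gives speedability with \<open>\<rho> = 1/2\<close>.
  Whether a requirement acts is decided by a bounded search through numerical codes of valid
  computation traces of Kleene's recursive functions.\<close>

section \<open>Computable functions of argument lists\<close>

definition rec_fn :: "nat \<Rightarrow> (nat list \<Rightarrow> nat) \<Rightarrow> bool" where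
  "rec_fn n f \<longleftrightarrow> (\<exists>t. \<forall>xs. length xs = n \<longrightarrow> eval t xs (f xs))"

lemma rec_fn_zero: "rec_fn n (\<lambda>_. 0)"
  unfolding rec_fn_def by (rule exI[of _ Zr]) (auto intro: eval.intros)

lemma rec_fn_proj: "i < n \<Longrightarrow> rec_fn n (\<lambda>xs. xs ! i)"
  unfolding rec_fn_def by (rule exI[of _ "Proj i"]) (auto intro: eval.intros)

lemma rec_fn_Suc: "rec_fn n f \<Longrightarrow> rec_fn n (\<lambda>xs. Suc (f xs))"
  unfolding rec_fn_def
proof (elim exE)
  fix t assume t: "\<forall>xs. length xs = n \<longrightarrow> eval t xs (f xs)"
  show "\<exists>t. \<forall>xs. length xs = n \<longrightarrow> eval t xs (Suc (f xs))"
    by (rule exI[of _ "Cn Sc [t]"]) (auto intro!: eval.intros simp: t)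
qed

lemma rec_fn_terms: "\<forall>g\<in>set gs. rec_fn n g \<Longrightarrow> \<exists>ts. \<forall>xs. length xs = n \<longrightarrow> list_all2 (\<lambda>t y. eval t xs y) ts (map (\<lambda>g. g xs) gs)"
proof (induction gs)
  case Nil show ?case by (intro exI[of _ "[]"]) simp
next
  case (Cons g gs)
  then obtain ts where ts: "\<forall>xs. length xs = n \<longrightarrow> list_all2 (\<lambda>t y. eval t xs y) ts (map (\<lambda>g. g xs) gs)" by auto
  from Cons obtain t where t: "\<forall>xs. length xs = n \<longrightarrow> eval t xs (g xs)" unfolding rec_fn_def by auto
  show ?case by (rule exI[of _ "t#ts"]) (simp add: t ts)
qed

lemma rec_fn_comp: "rec_fn m h \<Longrightarrow> length gs = m \<Longrightarrow> \<forall>g\<in>set gs. rec_fn n g \<Longrightarrow> rec_fn n (\<lambda>xs. h (map (\<lambda>g. g xs) gs))"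
proof -
  assume h: "rec_fn m h" and l: "length gs = m" and g: "\<forall>g\<in>set gs. rec_fn n g"
  from h obtain th where th: "\<forall>xs. length xs = m \<longrightarrow> eval th xs (h xs)" unfolding rec_fn_def by auto
  from rec_fn_terms[OF g] obtain ts where ts: "\<forall>xs. length xs = n \<longrightarrow> list_all2 (\<lambda>t y. eval t xs y) ts (map (\<lambda>g. g xs) gs)" by auto
  show ?thesis unfolding rec_fn_def
  proof (rule exI[of _ "Cn th ts"], intro allI impI)
    fix xs :: "nat list" assume "length xs = n"
    then show "eval (Cn th ts) xs (h (map (\<lambda>g. g xs) gs))"
      by (intro eval_Cn[where ys="map (\<lambda>g. g xs) gs"]) (auto simp: ts th l)
  qed
qed

lemma rec_fn_prim_rec:
  assumes f: "rec_fn n f" and g: "rec_fn (Suc (Suc n)) g"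
    and h0: "\<And>ys. length ys = n \<Longrightarrow> h (0#ys) = f ys"
    and hS: "\<And>k ys. length ys = n \<Longrightarrow> h (Suc k#ys) = g (k # h (k#ys) # ys)"
  shows "rec_fn (Suc n) h"
proof -
  from f obtain tf where tf: "\<forall>xs. length xs = n \<longrightarrow> eval tf xs (f xs)" unfolding rec_fn_def by auto
  from g obtain tg where tg: "\<forall>xs. length xs = Suc (Suc n) \<longrightarrow> eval tg xs (g xs)" unfolding rec_fn_def by auto
  have "\<forall>ys. length ys = n \<longrightarrow> eval (Pr tf tg) (k#ys) (h (k#ys))" for k
  proof (induction k)
    case 0 then show ?case using tf h0 by (auto intro: eval.intros)
  next
    case (Suc k) then show ?case using tg hS by (auto intro: eval.intros)
  qed
  then show ?thesis unfolding rec_fn_def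
    by (intro exI[of _ "Pr tf tg"]) (metis length_Suc_conv)
qed

lemma rec_fn_cong: "rec_fn n f \<Longrightarrow> (\<And>xs. length xs = n \<Longrightarrow> f xs = g xs) \<Longrightarrow> rec_fn n g"
  unfolding rec_fn_def by auto

lemma rec_fn_comp1: "rec_fn 1 h \<Longrightarrow> rec_fn n a \<Longrightarrow> rec_fn n (\<lambda>xs. h [a xs])"
  using rec_fn_comp[of 1 h "[a]" n] by simp
lemma rec_fn_comp2: "rec_fn 2 h \<Longrightarrow> rec_fn n a \<Longrightarrow> rec_fn n b \<Longrightarrow> rec_fn n (\<lambda>xs. h [a xs, b xs])"
  using rec_fn_comp[of 2 h "[a,b]" n] by simp
lemma rec_fn_comp3: "rec_fn 3 h \<Longrightarrow> rec_fn n a \<Longrightarrow> rec_fn n b \<Longrightarrow> rec_fn n c \<Longrightarrow> rec_fn n (\<lambda>xs. h [a xs, b xs, c xs])"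
  using rec_fn_comp[of 3 h "[a,b,c]" n] by (simp add: numeral_3_eq_3)

lemma rec_fn_comp_cons: "rec_fn (Suc n) h \<Longrightarrow> rec_fn n a \<Longrightarrow> rec_fn n (\<lambda>xs. h (a xs # xs))"
proof -
  assume h: "rec_fn (Suc n) h" and a: "rec_fn n a"
  have "rec_fn n (\<lambda>xs. h (map (\<lambda>g. g xs) (a # map (\<lambda>i xs. xs ! i) [0..<n])))"
    by (rule rec_fn_comp[OF h]) (auto simp: a rec_fn_proj)
  then show ?thesis
    by (rule rec_fn_cong) (auto simp: comp_def map_nth)
qed

lemma rec_fn_drop_second: "rec_fn (Suc n) h \<Longrightarrow> rec_fn (Suc (Suc n)) (\<lambda>xs. h (hd xs # drop 2 xs))"
proof -
  assume h: "rec_fn (Suc n) h"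
  have "rec_fn (Suc (Suc n)) (\<lambda>xs. h (map (\<lambda>g. g xs) ((\<lambda>xs. xs ! 0) # map (\<lambda>i xs. xs ! (i+2)) [0..<n])))"
    by (rule rec_fn_comp[OF h]) (auto simp: rec_fn_proj)
  then show ?thesis
  proof (rule rec_fn_cong)
    fix xs :: "nat list" assume l: "length xs = Suc (Suc n)"
    have "map (\<lambda>i. xs ! (i+2)) [0..<n] = drop 2 xs"
      using l by (intro nth_equalityI) auto
    moreover have "xs ! 0 = hd xs" using l by (cases xs) auto
    ultimately show "h (map (\<lambda>g. g xs) ((\<lambda>xs. xs ! 0) # map (\<lambda>i xs. xs ! (i+2)) [0..<n])) = h (hd xs # drop 2 xs)"
      by (simp add: comp_def)
  qed
qed

lemma rec_fn_const: "rec_fn n (\<lambda>_. c)"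
  by (induction c) (auto intro: rec_fn_zero rec_fn_Suc[where f="\<lambda>_. _"])


named_theorems rec_intros

lemma rec_fn_add2: "rec_fn 2 (\<lambda>xs. xs!0 + xs!1)"
proof -
  have "rec_fn (Suc 1) (\<lambda>xs. xs!0 + xs!1)"
    by (rule rec_fn_prim_rec[where f="\<lambda>ys. ys!0" and g="\<lambda>zs. Suc (zs!1)"])
       (auto intro!: rec_fn_proj rec_fn_Suc)
  then show ?thesis by (simp add: numeral_2_eq_2)
qed

lemma rec_fn_add[rec_intros]: "rec_fn n a \<Longrightarrow> rec_fn n b \<Longrightarrow> rec_fn n (\<lambda>xs. a xs + b xs)"
  using rec_fn_comp2[OF rec_fn_add2] by simp

lemma rec_fn_mult2: "rec_fn 2 (\<lambda>xs. xs!0 * xs!1)"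
proof -
  have "rec_fn (Suc 1) (\<lambda>xs. xs!0 * xs!1)"
    by (rule rec_fn_prim_rec[where f="\<lambda>ys. 0" and g="\<lambda>zs. zs!1 + zs!2"])
       (auto intro!: rec_fn_proj rec_fn_add rec_fn_zero)
  then show ?thesis by (simp add: numeral_2_eq_2)
qed

lemma rec_fn_mult[rec_intros]: "rec_fn n a \<Longrightarrow> rec_fn n b \<Longrightarrow> rec_fn n (\<lambda>xs. a xs * b xs)"
  using rec_fn_comp2[OF rec_fn_mult2] by simp

lemma rec_fn_pred1: "rec_fn 1 (\<lambda>xs. xs!0 - 1)"
proof -
  have "rec_fn (Suc 0) (\<lambda>xs. xs!0 - 1)"
    by (rule rec_fn_prim_rec[where f="\<lambda>ys. 0" and g="\<lambda>zs. zs!0"])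
       (auto intro: rec_fn_proj rec_fn_zero)
  then show ?thesis by (simp add: numeral_2_eq_2)
qed

lemma rec_fn_sub2: "rec_fn 2 (\<lambda>xs. xs!1 - xs!0)"
proof -
  have "rec_fn (Suc 1) (\<lambda>xs. xs!1 - xs!0)"
    by (rule rec_fn_prim_rec[where f="\<lambda>ys. ys!0" and g="\<lambda>zs. zs!1 - 1"])
       (auto intro: rec_fn_proj rec_fn_comp1[OF rec_fn_pred1, where a="\<lambda>zs. zs!1", simplified])
  then show ?thesis by (simp add: numeral_2_eq_2)
qed

lemma rec_fn_sub[rec_intros]: "rec_fn n a \<Longrightarrow> rec_fn n b \<Longrightarrow> rec_fn n (\<lambda>xs. a xs - b xs)"
  using rec_fn_comp2[OF rec_fn_sub2, of n b a] by simp

lemma rec_fn_pow2: "rec_fn 2 (\<lambda>xs. xs!1 ^ xs!0)"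
proof -
  have "rec_fn (Suc 1) (\<lambda>xs. xs!1 ^ xs!0)"
    by (rule rec_fn_prim_rec[where f="\<lambda>ys. 1" and g="\<lambda>zs. zs!1 * zs!2"])
       (auto intro!: rec_fn_proj rec_fn_mult rec_fn_const)
  then show ?thesis by (simp add: numeral_2_eq_2)
qed

lemma rec_fn_pow[rec_intros]: "rec_fn n a \<Longrightarrow> rec_fn n b \<Longrightarrow> rec_fn n (\<lambda>xs. a xs ^ b xs)"
  using rec_fn_comp2[OF rec_fn_pow2, of n b a] by simp

lemmas [rec_intros] = rec_fn_const rec_fn_Suc

definition rec_pred :: "nat \<Rightarrow> (nat list \<Rightarrow> bool) \<Rightarrow> bool" where
  "rec_pred n P \<longleftrightarrow> rec_fn n (\<lambda>xs. if P xs then 1 else 0)"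

lemma rec_pred_less[rec_intros]: "rec_fn n a \<Longrightarrow> rec_fn n b \<Longrightarrow> rec_pred n (\<lambda>xs. a xs < b xs)"
  unfolding rec_pred_def
  by (rule rec_fn_cong[where f="\<lambda>xs. 1 - (1 - (b xs - a xs))"]) (auto intro!: rec_intros)

lemma rec_pred_eq[rec_intros]: "rec_fn n a \<Longrightarrow> rec_fn n b \<Longrightarrow> rec_pred n (\<lambda>xs. a xs = b xs)"
  unfolding rec_pred_def
  by (rule rec_fn_cong[where f="\<lambda>xs. 1 - ((a xs - b xs) + (b xs - a xs))"]) (auto intro!: rec_intros)

lemma rec_pred_not[rec_intros]: "rec_pred n P \<Longrightarrow> rec_pred n (\<lambda>xs. \<not> P xs)"
  unfolding rec_pred_def
  by (rule rec_fn_cong[where f="\<lambda>xs. 1 - (if P xs then 1 else 0)"]) (auto intro!: rec_intros)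

lemma rec_pred_and[rec_intros]: "rec_pred n P \<Longrightarrow> rec_pred n Q \<Longrightarrow> rec_pred n (\<lambda>xs. P xs \<and> Q xs)"
  unfolding rec_pred_def
  by (rule rec_fn_cong[where f="\<lambda>xs. (if P xs then 1 else 0) * (if Q xs then 1 else 0)"]) (auto intro!: rec_intros)

lemma rec_pred_or[rec_intros]: "rec_pred n P \<Longrightarrow> rec_pred n Q \<Longrightarrow> rec_pred n (\<lambda>xs. P xs \<or> Q xs)"
  using rec_pred_not[OF rec_pred_and[OF rec_pred_not rec_pred_not], of n P Q] by simp

lemma rec_pred_le[rec_intros]: "rec_fn n a \<Longrightarrow> rec_fn n b \<Longrightarrow> rec_pred n (\<lambda>xs. a xs \<le> b xs)"
  using rec_pred_not[OF rec_pred_less, of n b a] by (simp add: not_less)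

lemma rec_pred_neq[rec_intros]: "rec_fn n a \<Longrightarrow> rec_fn n b \<Longrightarrow> rec_pred n (\<lambda>xs. a xs \<noteq> b xs)"
  using rec_pred_not[OF rec_pred_eq, of n a b] by simp

lemma rec_fn_if[rec_intros]: "rec_pred n P \<Longrightarrow> rec_fn n a \<Longrightarrow> rec_fn n b \<Longrightarrow> rec_fn n (\<lambda>xs. if P xs then a xs else b xs)"
  unfolding rec_pred_def
  by (rule rec_fn_cong[where f="\<lambda>xs. (if P xs then 1 else 0) * a xs + (1 - (if P xs then 1 else 0)) * b xs"])
     (auto intro!: rec_intros)

lemma rec_pred_cong: "rec_pred n P \<Longrightarrow> (\<And>xs. length xs = n \<Longrightarrow> P xs = Q xs) \<Longrightarrow> rec_pred n Q"
  unfolding rec_pred_def by (erule rec_fn_cong) auto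

lemma rec_pred_comp1: "rec_pred 1 (\<lambda>xs. P (xs!0)) \<Longrightarrow> rec_fn n a \<Longrightarrow> rec_pred n (\<lambda>xs. P (a xs))"
  unfolding rec_pred_def using rec_fn_comp1 by fastforce
lemma rec_pred_comp3: "rec_pred 3 (\<lambda>xs. P (xs!0) (xs!1) (xs!2)) \<Longrightarrow> rec_fn n a \<Longrightarrow> rec_fn n b \<Longrightarrow> rec_fn n c \<Longrightarrow> rec_pred n (\<lambda>xs. P (a xs) (b xs) (c xs))"
  unfolding rec_pred_def using rec_fn_comp3 by fastforce
lemma rec_fn_comp_list: "rec_fn m h \<Longrightarrow> length gs = m \<Longrightarrow> \<forall>g\<in>set gs. rec_fn n g \<Longrightarrow> (\<And>xs. length xs = n \<Longrightarrow> h (map (\<lambda>g. g xs) gs) = G xs) \<Longrightarrow> rec_fn n G"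
  by (rule rec_fn_cong[OF rec_fn_comp]) auto

lemma rec_pred_if[rec_intros]: "rec_pred n C \<Longrightarrow> rec_pred n A \<Longrightarrow> rec_pred n B \<Longrightarrow> rec_pred n (\<lambda>xs. if C xs then A xs else B xs)"
  unfolding rec_pred_def by (rule rec_fn_cong[OF rec_fn_if[of n C "\<lambda>xs. if A xs then 1 else 0" "\<lambda>xs. if B xs then 1 else 0"]]) (auto simp: rec_pred_def)

lemma rec_pred_bex:
  assumes Q: "rec_pred (Suc n) Q" and a: "rec_fn n a"
    and P: "\<And>xs. length xs = n \<Longrightarrow> P xs = (\<exists>i<a xs. Q (i#xs))"
  shows "rec_pred n P"
proof -
  define H where "H = (\<lambda>ys. if \<exists>i<hd ys. Q (i # tl ys) then 1 else (0::nat))"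
  have g: "rec_pred (Suc (Suc n)) (\<lambda>zs. zs!1 \<noteq> 0 \<or> Q (hd zs # drop 2 zs))"
    using Q unfolding rec_pred_def
    by (intro rec_pred_or[unfolded rec_pred_def] rec_pred_neq[unfolded rec_pred_def] rec_fn_proj rec_fn_const rec_fn_drop_second) auto
  have "rec_fn (Suc n) H"
  proof (rule rec_fn_prim_rec[where f="\<lambda>_. 0" and g="\<lambda>zs. if zs!1 \<noteq> 0 \<or> Q (hd zs # drop 2 zs) then 1 else 0"])
    show "rec_fn n (\<lambda>_. 0)" by (rule rec_fn_zero)
    show "rec_fn (Suc (Suc n)) (\<lambda>zs. if zs!1 \<noteq> 0 \<or> Q (hd zs # drop 2 zs) then 1 else 0)"
      using g unfolding rec_pred_def .
    show "H (0 # ys) = 0" for ys unfolding H_def by simp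
    show "H (Suc k # ys) = (if (k # H (k # ys) # ys) ! 1 \<noteq> 0 \<or> Q (hd (k # H (k # ys) # ys) # drop 2 (k # H (k # ys) # ys)) then 1 else 0)" for k ys
      unfolding H_def by (auto simp: less_Suc_eq)
  qed
  then have "rec_fn n (\<lambda>xs. H (a xs # xs))" by (rule rec_fn_comp_cons[OF _ a])
  then show ?thesis unfolding rec_pred_def
    by (rule rec_fn_cong) (simp add: H_def P)
qed

lemma rec_pred_ball:
  assumes Q: "rec_pred (Suc n) Q" and a: "rec_fn n a"
    and P: "\<And>xs. length xs = n \<Longrightarrow> P xs = (\<forall>i<a xs. Q (i#xs))"
  shows "rec_pred n P"
proof -
  have "rec_pred n (\<lambda>xs. \<exists>i<a xs. \<not> Q (i#xs))"
    by (rule rec_pred_bex[OF rec_pred_not[OF Q] a]) simp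
  from rec_pred_not[OF this] show ?thesis
    by (rule rec_pred_cong) (simp add: P)
qed

lemma rec_fn_sum:
  assumes F: "rec_fn (Suc n) F" and a: "rec_fn n a"
    and G: "\<And>xs. length xs = n \<Longrightarrow> G xs = (\<Sum>i<a xs. F (i#xs))"
  shows "rec_fn n G"
proof -
  define H where "H = (\<lambda>ys. \<Sum>i<hd ys. F (i # tl ys))"
  have "rec_fn (Suc n) H"
  proof (rule rec_fn_prim_rec[where f="\<lambda>_. 0" and g="\<lambda>zs. zs!1 + F (hd zs # drop 2 zs)"])
    show "rec_fn n (\<lambda>_. 0)" by (rule rec_fn_zero)
    show "rec_fn (Suc (Suc n)) (\<lambda>zs. zs!1 + F (hd zs # drop 2 zs))"
      by (intro rec_fn_add rec_fn_proj rec_fn_drop_second F) auto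
    show "H (0 # ys) = 0" for ys unfolding H_def by simp
    show "H (Suc k # ys) = (k # H (k # ys) # ys) ! 1 + F (hd (k # H (k # ys) # ys) # drop 2 (k # H (k # ys) # ys))" for k ys
      unfolding H_def by simp
  qed
  then have "rec_fn n (\<lambda>xs. H (a xs # xs))" by (rule rec_fn_comp_cons[OF _ a])
  then show ?thesis
    by (rule rec_fn_cong) (simp add: H_def G)
qed

lemma rec_fn_indicator: "rec_pred n P \<Longrightarrow> rec_fn n (\<lambda>xs. if P xs then 1 else 0)" unfolding rec_pred_def .

section \<open>Pairing and list codes\<close>

lemma rec_fn_triangle1: "rec_fn 1 (\<lambda>xs. triangle (xs!0))"
proof -
  have "rec_fn (Suc 0) (\<lambda>xs. triangle (xs!0))"
    by (rule rec_fn_prim_rec[where f="\<lambda>ys. 0" and g="\<lambda>zs. zs!1 + Suc (zs!0)"])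
       (auto intro!: rec_fn_proj rec_fn_add rec_fn_zero rec_fn_Suc)
  then show ?thesis by simp
qed

lemma rec_fn_prod_encode[rec_intros]: "rec_fn n a \<Longrightarrow> rec_fn n b \<Longrightarrow> rec_fn n (\<lambda>xs. prod_encode (a xs, b xs))"
proof -
  assume a: "rec_fn n a" and b: "rec_fn n b"
  have "rec_fn n (\<lambda>xs. triangle (a xs + b xs) + a xs)"
    by (intro rec_fn_add rec_fn_comp1[OF rec_fn_triangle1, simplified] a b)
  then show ?thesis by (simp add: prod_encode_def)
qed

definition cfst :: "nat \<Rightarrow> nat" where "cfst z = fst (prod_decode z)"
definition csnd :: "nat \<Rightarrow> nat" where "csnd z = snd (prod_decode z)"

lemma cfst_prod_encode[simp]: "cfst (prod_encode (a,b)) = a" by (simp add: cfst_def)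
lemma csnd_prod_encode[simp]: "csnd (prod_encode (a,b)) = b" by (simp add: csnd_def)
lemma prod_encode_cfst_csnd: "prod_encode (cfst z, csnd z) = z" by (simp add: cfst_def csnd_def)
lemma cfst_le: "cfst z \<le> z" by (metis le_prod_encode_1 prod_encode_cfst_csnd)
lemma csnd_le: "csnd z \<le> z" by (metis le_prod_encode_2 prod_encode_cfst_csnd)

text \<open>Bounded searches for the components make \<open>cfst\<close> and \<open>csnd\<close> computable.\<close>

lemma cfst_eq_sum: "cfst z = (\<Sum>a<Suc z. a * (if \<exists>b<Suc z. prod_encode (a,b) = z then 1 else 0))"
proof -
  have eq: "(\<exists>b<Suc z. prod_encode (a,b) = z) \<longleftrightarrow> a = cfst z" for a
  proof
    assume "\<exists>b<Suc z. prod_encode (a,b) = z"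
    then obtain b where "prod_encode (a,b) = z" by auto
    then show "a = cfst z" by auto
  next
    assume "a = cfst z"
    then show "\<exists>b<Suc z. prod_encode (a,b) = z"
      using prod_encode_cfst_csnd[of z] csnd_le[of z] by (intro exI[of _ "csnd z"]) auto
  qed
  have "(\<Sum>a<Suc z. a * (if \<exists>b<Suc z. prod_encode (a,b) = z then 1 else 0)) = (\<Sum>a<Suc z. if a = cfst z then a else 0)"
    by (rule sum.cong) (auto simp: eq)
  also have "\<dots> = cfst z" using cfst_le[of z] by (simp add: sum.delta)
  finally show ?thesis by simp
qed

lemma csnd_eq_sum: "csnd z = (\<Sum>b<Suc z. b * (if \<exists>a<Suc z. prod_encode (a,b) = z then 1 else 0))"
proof -
  have eq: "(\<exists>a<Suc z. prod_encode (a,b) = z) \<longleftrightarrow> b = csnd z" for b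
  proof
    assume "\<exists>a<Suc z. prod_encode (a,b) = z"
    then obtain a where "prod_encode (a,b) = z" by auto
    then show "b = csnd z" by auto
  next
    assume "b = csnd z"
    then show "\<exists>a<Suc z. prod_encode (a,b) = z"
      using prod_encode_cfst_csnd[of z] cfst_le[of z] by (intro exI[of _ "cfst z"]) auto
  qed
  have "(\<Sum>b<Suc z. b * (if \<exists>a<Suc z. prod_encode (a,b) = z then 1 else 0)) = (\<Sum>b<Suc z. if b = csnd z then b else 0)"
    by (rule sum.cong) (auto simp: eq)
  also have "\<dots> = csnd z" using csnd_le[of z] by (simp add: sum.delta)
  finally show ?thesis by simp
qed

lemma rec_fn_cfst1: "rec_fn 1 (\<lambda>xs. cfst (xs!0))"
proof (rule rec_fn_sum[where F="\<lambda>ys. ys!0 * (if \<exists>b<Suc (ys!1). prod_encode (ys!0,b) = ys!1 then 1 else 0)" and a="\<lambda>xs. Suc (xs!0)"])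
  show "rec_fn (Suc 1) (\<lambda>ys. ys!0 * (if \<exists>b<Suc (ys!1). prod_encode (ys!0,b) = ys!1 then 1 else 0))"
  proof (intro rec_fn_mult rec_fn_proj rec_fn_indicator)
    show "rec_pred (Suc 1) (\<lambda>ys. \<exists>b<Suc (ys!1). prod_encode (ys!0,b) = ys!1)"
      by (rule rec_pred_bex[where Q="\<lambda>ws. prod_encode (ws!1, ws!0) = ws!2" and a="\<lambda>ys. Suc (ys!1)"])
         (auto intro!: rec_intros rec_fn_proj)
  qed simp
  show "rec_fn 1 (\<lambda>xs. Suc (xs!0))" by (auto intro!: rec_intros rec_fn_proj)
  show "cfst (xs!0) = (\<Sum>i<Suc (xs!0). (i#xs)!0 * (if \<exists>b<Suc ((i#xs)!1). prod_encode ((i#xs)!0,b) = (i#xs)!1 then 1 else 0))" for xs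
    by (simp add: cfst_eq_sum[of "xs!0"])
qed

lemma rec_fn_csnd1: "rec_fn 1 (\<lambda>xs. csnd (xs!0))"
proof (rule rec_fn_sum[where F="\<lambda>ys. ys!0 * (if \<exists>a<Suc (ys!1). prod_encode (a,ys!0) = ys!1 then 1 else 0)" and a="\<lambda>xs. Suc (xs!0)"])
  show "rec_fn (Suc 1) (\<lambda>ys. ys!0 * (if \<exists>a<Suc (ys!1). prod_encode (a,ys!0) = ys!1 then 1 else 0))"
  proof (intro rec_fn_mult rec_fn_proj rec_fn_indicator)
    show "rec_pred (Suc 1) (\<lambda>ys. \<exists>a<Suc (ys!1). prod_encode (a,ys!0) = ys!1)"
      by (rule rec_pred_bex[where Q="\<lambda>ws. prod_encode (ws!0, ws!1) = ws!2" and a="\<lambda>ys. Suc (ys!1)"])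
         (auto intro!: rec_intros rec_fn_proj)
  qed simp
  show "rec_fn 1 (\<lambda>xs. Suc (xs!0))" by (auto intro!: rec_intros rec_fn_proj)
  show "csnd (xs!0) = (\<Sum>i<Suc (xs!0). (i#xs)!0 * (if \<exists>a<Suc ((i#xs)!1). prod_encode (a,(i#xs)!0) = (i#xs)!1 then 1 else 0))" for xs
    by (simp add: csnd_eq_sum[of "xs!0"])
qed

lemma rec_fn_cfst[rec_intros]: "rec_fn n a \<Longrightarrow> rec_fn n (\<lambda>xs. cfst (a xs))"
  using rec_fn_comp1[OF rec_fn_cfst1] by simp
lemma rec_fn_csnd[rec_intros]: "rec_fn n a \<Longrightarrow> rec_fn n (\<lambda>xs. csnd (a xs))"
  using rec_fn_comp1[OF rec_fn_csnd1] by simp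

definition ccons :: "nat \<Rightarrow> nat \<Rightarrow> nat" where "ccons a b = Suc (prod_encode (a,b))"
definition ctl :: "nat \<Rightarrow> nat" where "ctl c = (if c = 0 then 0 else csnd (c - 1))"
definition chd :: "nat \<Rightarrow> nat" where "chd c = (if c = 0 then 0 else cfst (c - 1))"
definition cdrop :: "nat \<Rightarrow> nat \<Rightarrow> nat" where "cdrop i c = (ctl ^^ i) c"
definition cnth :: "nat \<Rightarrow> nat \<Rightarrow> nat" where "cnth c i = chd (cdrop i c)"
definition clen :: "nat \<Rightarrow> nat" where "clen c = (\<Sum>i<c. if cdrop i c \<noteq> 0 then 1 else 0)"

lemma rec_fn_ccons[rec_intros]: "rec_fn n a \<Longrightarrow> rec_fn n b \<Longrightarrow> rec_fn n (\<lambda>xs. ccons (a xs) (b xs))"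
  unfolding ccons_def by (intro rec_intros)
lemma rec_fn_ctl[rec_intros]: "rec_fn n a \<Longrightarrow> rec_fn n (\<lambda>xs. ctl (a xs))"
  unfolding ctl_def by (intro rec_intros)
lemma rec_fn_chd[rec_intros]: "rec_fn n a \<Longrightarrow> rec_fn n (\<lambda>xs. chd (a xs))"
  unfolding chd_def by (intro rec_intros)

lemma rec_fn_cdrop2: "rec_fn 2 (\<lambda>xs. cdrop (xs!0) (xs!1))"
proof -
  have "rec_fn (Suc 1) (\<lambda>xs. cdrop (xs!0) (xs!1))"
    by (rule rec_fn_prim_rec[where f="\<lambda>ys. ys!0" and g="\<lambda>zs. ctl (zs!1)"])
       (auto intro!: rec_fn_proj rec_fn_ctl simp: cdrop_def)
  then show ?thesis by (simp add: numeral_2_eq_2)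
qed
lemma rec_fn_cdrop[rec_intros]: "rec_fn n a \<Longrightarrow> rec_fn n b \<Longrightarrow> rec_fn n (\<lambda>xs. cdrop (a xs) (b xs))"
  using rec_fn_comp2[OF rec_fn_cdrop2] by simp
lemma rec_fn_cnth[rec_intros]: "rec_fn n a \<Longrightarrow> rec_fn n b \<Longrightarrow> rec_fn n (\<lambda>xs. cnth (a xs) (b xs))"
  unfolding cnth_def by (intro rec_intros)

lemma rec_fn_clen1: "rec_fn 1 (\<lambda>xs. clen (xs!0))"
  by (rule rec_fn_sum[where F="\<lambda>ys. if cdrop (ys!0) (ys!1) \<noteq> 0 then 1 else 0" and a="\<lambda>xs. xs!0"])
     (auto intro!: rec_intros rec_fn_proj simp: clen_def)
lemma rec_fn_clen[rec_intros]: "rec_fn n a \<Longrightarrow> rec_fn n (\<lambda>xs. clen (a xs))"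
  using rec_fn_comp1[OF rec_fn_clen1] by simp

lemma chd_Suc_prod_encode[simp]: "chd (Suc (prod_encode (a,b))) = a" by (simp add: chd_def)
lemma ctl_Suc_prod_encode[simp]: "ctl (Suc (prod_encode (a,b))) = b" by (simp add: ctl_def)

lemma ccons_list_encode: "ccons x (list_encode xs) = list_encode (x#xs)" by (simp add: ccons_def)
lemma ctl_list_encode[simp]: "ctl (list_encode (x#xs)) = list_encode xs" by (simp add: ctl_def)
lemma chd_list_encode[simp]: "chd (list_encode (x#xs)) = x" by (simp add: chd_def)
lemma cdrop_list_encode: "cdrop i (list_encode xs) = list_encode (drop i xs)"
proof (induction i arbitrary: xs)
  case 0 then show ?case by (simp add: cdrop_def)
next
  case (Suc i)
  have "cdrop (Suc i) (list_encode xs) = cdrop i (ctl (list_encode xs))"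
    by (simp only: cdrop_def funpow_Suc_right comp_def)
  also have "ctl (list_encode xs) = list_encode (tl xs)" by (cases xs) (auto simp: ctl_def)
  finally show ?case using Suc by (simp add: drop_Suc)
qed
lemma cnth_list_encode[simp]: "i < length xs \<Longrightarrow> cnth (list_encode xs) i = xs ! i"
  by (simp add: cnth_def cdrop_list_encode Cons_nth_drop_Suc[symmetric] chd_def)

lemma length_le_list_encode: "length xs \<le> list_encode xs"
  by (induction xs) (auto intro: le_trans[OF _ le_prod_encode_2] simp del: list_encode.simps(2) simp: list_encode.simps(2) Suc_le_mono)

lemma mem_less_list_encode: "x \<in> set xs \<Longrightarrow> x < list_encode xs"
proof (induction xs)
  case Nil then show ?case by simp
next
  case (Cons y ys)
  have "y < list_encode (y#ys)" "list_encode ys < list_encode (y#ys)"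
    using le_prod_encode_1[of y "list_encode ys"] le_prod_encode_2[of "list_encode ys" y] by auto
  then show ?case using Cons by auto
qed

lemma clen_list_encode[simp]: "clen (list_encode xs) = length xs"
proof -
  have "clen (list_encode xs) = (\<Sum>i<list_encode xs. if i < length xs then 1 else 0)"
    unfolding clen_def by (rule sum.cong) (auto simp: cdrop_list_encode list_encode_eq[where y="[]", simplified])
  also have "\<dots> = card {i. i < list_encode xs \<and> i < length xs}"
    by (simp add: sum.If_cases Int_def)
  also have "{i. i < list_encode xs \<and> i < length xs} = {..<length xs}"
    using length_le_list_encode[of xs] by auto
  finally show ?thesis by simp
qed

section \<open>Numbering of recursive function terms\<close>

primrec encode_recf :: "recf \<Rightarrow> nat" where
  "encode_recf Zr = prod_encode (0,0)"
| "encode_recf Sc = prod_encode (1,0)"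
| "encode_recf (Proj i) = prod_encode (2,i)"
| "encode_recf (Cn f gs) = prod_encode (3, prod_encode (encode_recf f, list_encode (map encode_recf gs)))"
| "encode_recf (Pr f g) = prod_encode (4, prod_encode (encode_recf f, encode_recf g))"
| "encode_recf (Mn f) = prod_encode (5, encode_recf f)"

lemma triangle_ge: "n \<le> triangle n" by (induction n) auto

lemma csnd_less: "0 < cfst c \<Longrightarrow> csnd c < c"
proof -
  assume "0 < cfst c"
  have "c = triangle (cfst c + csnd c) + cfst c" using prod_encode_cfst_csnd[of c] by (simp add: prod_encode_def)
  moreover have "cfst c + csnd c \<le> triangle (cfst c + csnd c)" by (rule triangle_ge)
  ultimately show ?thesis using \<open>0 < cfst c\<close> by linarith
qed

function decode_recf :: "nat \<Rightarrow> recf" where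
  "decode_recf c = (if cfst c = 1 then Sc
     else if cfst c = 2 then Proj (csnd c)
     else if cfst c = 3 then Cn (decode_recf (cfst (csnd c))) (map decode_recf (list_decode (csnd (csnd c))))
     else if cfst c = 4 then Pr (decode_recf (cfst (csnd c))) (decode_recf (csnd (csnd c)))
     else if cfst c = 5 then Mn (decode_recf (csnd c))
     else Zr)"
  by pat_completeness auto

lemma mem_list_decode_less: "x \<in> set (list_decode n) \<Longrightarrow> x < n"
  using mem_less_list_encode[of x "list_decode n"] by simp

termination
proof (relation "measure id")
  fix c x
  assume "\<not> cfst c = 1" "\<not> cfst c = 2" "cfst c = 3" "x \<in> set (list_decode (csnd (csnd c)))"
  then show "(x, c) \<in> measure id"
    using mem_list_decode_less[of x] csnd_le[of "csnd c"] csnd_less[of c] by force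
qed (auto intro: le_less_trans[OF cfst_le csnd_less] le_less_trans[OF csnd_le csnd_less] csnd_less)

declare decode_recf.simps[simp del]

lemma decode_encode_recf[simp]: "decode_recf (encode_recf f) = f"
  by (induction f) (subst decode_recf.simps, simp add: map_idI)+


section \<open>Computation traces\<close>

definition snd3 :: "nat \<Rightarrow> nat" where "snd3 j = cfst (csnd j)"
definition thd3 :: "nat \<Rightarrow> nat" where "thd3 j = csnd (csnd j)"
definition encode3 :: "nat \<Rightarrow> nat \<Rightarrow> nat \<Rightarrow> nat" where "encode3 a b c = prod_encode (a, prod_encode (b, c))"

lemma encode3_simps[simp]: "cfst (encode3 a b c) = a" "snd3 (encode3 a b c) = b" "thd3 (encode3 a b c) = c"
  by (simp_all add: encode3_def snd3_def thd3_def)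
lemma encode3_parts: "encode3 (cfst j) (snd3 j) (thd3 j) = j"
  by (simp add: encode3_def snd3_def thd3_def prod_encode_cfst_csnd)

text \<open>A number \<open>encode3 c cx y\<close> codes the judgement that the recursive function with code
  \<open>c\<close> maps the argument list with code \<open>cx\<close> to \<open>y\<close>; it is justified by a set of
  judgements if it follows from them by one rule of \<open>eval\<close>.\<close>

definition justified :: "nat \<Rightarrow> nat set \<Rightarrow> bool" where
"justified j S = (let c = cfst j; cx = snd3 j; y = thd3 j; t = cfst c; d = csnd c in
  if t = 1 then cx \<noteq> 0 \<and> y = Suc (chd cx)
  else if t = 2 then d < clen cx \<and> y = cnth cx d
  else if t = 3 then (\<exists>j'\<in>S. cfst j' = cfst d \<and> thd3 j' = y \<and> clen (snd3 j') = clen (csnd d) \<and>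
          (\<forall>r<clen (csnd d). encode3 (cnth (csnd d) r) cx (cnth (snd3 j') r) \<in> S))
  else if t = 4 then cx \<noteq> 0 \<and> (if chd cx = 0 then encode3 (cfst d) (ctl cx) y \<in> S
          else (\<exists>j'\<in>S. cfst j' = c \<and> snd3 j' = ccons (chd cx - 1) (ctl cx) \<and>
                 encode3 (csnd d) (ccons (chd cx - 1) (ccons (thd3 j') (ctl cx))) y \<in> S))
  else if t = 5 then encode3 d (ccons y cx) 0 \<in> S \<and> (\<forall>m<y. \<exists>j'\<in>S. cfst j' = d \<and> snd3 j' = ccons m cx \<and> thd3 j' \<noteq> 0)
  else y = 0)"

lemma justified_mono: "justified j S \<Longrightarrow> S \<subseteq> S' \<Longrightarrow> justified j S'"
  unfolding justified_def Let_def
  by (simp split: if_splits; blast)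

definition valid_trace :: "nat list \<Rightarrow> bool" where
  "valid_trace L \<longleftrightarrow> (\<forall>i<length L. justified (L!i) (set (take i L)))"

lemma valid_trace_Nil[simp]: "valid_trace []" by (simp add: valid_trace_def)

lemma valid_trace_append: "valid_trace A \<Longrightarrow> valid_trace B \<Longrightarrow> valid_trace (A @ B)"
  unfolding valid_trace_def
proof (intro allI impI)
  fix i assume A: "\<forall>i<length A. justified (A ! i) (set (take i A))" and B: "\<forall>i<length B. justified (B ! i) (set (take i B))"
    and i: "i < length (A @ B)"
  show "justified ((A @ B) ! i) (set (take i (A @ B)))"
  proof (cases "i < length A")
    case True then show ?thesis using A by (simp add: nth_append)
  next
    case False
    then have "justified (B ! (i - length A)) (set (take (i - length A) B))" using B i by auto
    then show ?thesis using False by (auto simp: nth_append intro: justified_mono)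
  qed
qed

lemma valid_trace_snoc: "valid_trace A \<Longrightarrow> justified j (set A) \<Longrightarrow> valid_trace (A @ [j])"
  unfolding valid_trace_def by (auto simp: nth_append less_Suc_eq)

definition holds :: "nat \<Rightarrow> bool" where
  "holds j \<longleftrightarrow> eval (decode_recf (cfst j)) (list_decode (snd3 j)) (thd3 j)"

lemma list_decode_nonzero: "n \<noteq> 0 \<Longrightarrow> list_decode n = chd n # list_decode (ctl n)"
  by (cases n) (auto simp: chd_def ctl_def cfst_def csnd_def split: prod.splits)

lemma decode_recf_Sc: "cfst c = 1 \<Longrightarrow> decode_recf c = Sc"
  by (subst decode_recf.simps) simp

lemma decode_recf_Proj: "cfst c = 2 \<Longrightarrow> decode_recf c = Proj (csnd c)"
  by (subst decode_recf.simps) simp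

lemma decode_recf_Cn:
  "cfst c = 3 \<Longrightarrow> decode_recf c = Cn (decode_recf (cfst (csnd c))) (map decode_recf (list_decode (csnd (csnd c))))"
  by (subst decode_recf.simps) simp

lemma decode_recf_Pr: "cfst c = 4 \<Longrightarrow> decode_recf c = Pr (decode_recf (cfst (csnd c))) (decode_recf (csnd (csnd c)))"
  by (subst decode_recf.simps) simp

lemma decode_recf_Mn: "cfst c = 5 \<Longrightarrow> decode_recf c = Mn (decode_recf (csnd c))"
  by (subst decode_recf.simps) simp

lemma decode_recf_Zr: "cfst c \<notin> {1, 2, 3, 4, 5} \<Longrightarrow> decode_recf c = Zr"
  by (subst decode_recf.simps) simp

lemma holds_encode3: "holds (encode3 c cx y) \<longleftrightarrow> eval (decode_recf c) (list_decode cx) y"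
  by (simp add: holds_def)

lemma holds_Cn:
  assumes c: "cfst c = 3" and f: "holds (encode3 (cfst (csnd c)) (list_encode ys) y)"
    and len: "length ys = clen (csnd (csnd c))"
    and gs: "\<forall>r<length ys. holds (encode3 (cnth (csnd (csnd c)) r) cx (ys ! r))"
  shows "holds (encode3 c cx y)"
proof -
  define gs where "gs = list_decode (csnd (csnd c))"
  have gs_code: "csnd (csnd c) = list_encode gs" by (simp add: gs_def)
  have "list_all2 (\<lambda>g y. eval g (list_decode cx) y) (map decode_recf gs) ys"
    using len gs by (auto simp: list_all2_conv_all_nth gs_code holds_encode3)
  with f show ?thesis
    by (simp add: holds_encode3 decode_recf_Cn[OF c] gs_def[symmetric] eval_Cn)
qed

lemma holds_Pr0:
  assumes "cfst c = 4" and "cx \<noteq> 0" and "chd cx = 0"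
    and "holds (encode3 (cfst (csnd c)) (ctl cx) y)"
  shows "holds (encode3 c cx y)"
  using assms by (simp add: holds_encode3 decode_recf_Pr list_decode_nonzero eval_Pr0)

lemma holds_PrS:
  assumes c: "cfst c = 4" and cx: "cx \<noteq> 0" "chd cx \<noteq> 0"
    and rec: "holds (encode3 c (ccons (chd cx - 1) (ctl cx)) z)"
    and step: "holds (encode3 (csnd (csnd c)) (ccons (chd cx - 1) (ccons z (ctl cx))) y)"
  shows "holds (encode3 c cx y)"
proof -
  have "list_decode cx = Suc (chd cx - 1) # list_decode (ctl cx)"
    using cx by (simp add: list_decode_nonzero)
  with rec step show ?thesis
    by (simp add: holds_encode3 decode_recf_Pr[OF c] ccons_def eval_PrS)
qed

lemma holds_Mn:
  assumes c: "cfst c = 5" and zero: "holds (encode3 (csnd c) (ccons y cx) 0)"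
    and below: "\<forall>m<y. \<exists>z. holds (encode3 (csnd c) (ccons m cx) (Suc z))"
  shows "holds (encode3 c cx y)"
  using zero below by (simp add: holds_encode3 decode_recf_Mn[OF c] ccons_def eval_Mn)

lemma holds_if_justified:
  assumes J: "justified j S" and S: "\<forall>j'\<in>S. holds j'"
  shows "holds j"
proof -
  define c cx y where "c = cfst j" and "cx = snd3 j" and "y = thd3 j"
  have j: "j = encode3 c cx y" by (simp add: c_def cx_def y_def encode3_parts)
  have J': "justified (encode3 c cx y) S" using J j by simp
  consider "cfst c = 1" | "cfst c = 2" | "cfst c = 3" | "cfst c = 4" | "cfst c = 5"
    | "cfst c \<notin> {1, 2, 3, 4, 5}" by blast
  then have "holds (encode3 c cx y)"
  proof cases
    case 1
    with J' show ?thesis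
      by (simp add: justified_def Let_def holds_encode3 decode_recf_Sc list_decode_nonzero eval.intros)
  next
    case 2
    obtain xs where xs: "cx = list_encode xs" by (metis list_decode_inverse)
    with 2 J' show ?thesis
      by (simp add: justified_def Let_def holds_encode3 decode_recf_Proj eval_Proj)
  next
    case 3
    with J' obtain j' where j': "j' \<in> S" "cfst j' = cfst (csnd c)" "thd3 j' = y"
      "clen (snd3 j') = clen (csnd (csnd c))"
      "\<forall>r<clen (csnd (csnd c)). encode3 (cnth (csnd (csnd c)) r) cx (cnth (snd3 j') r) \<in> S"
      by (auto simp: justified_def Let_def)
    define ys where "ys = list_decode (snd3 j')"
    have ys: "snd3 j' = list_encode ys" by (simp add: ys_def)
    have "holds (encode3 (cfst (csnd c)) (list_encode ys) y)"
      using j' ys S by (metis encode3_parts)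
    moreover have len: "length ys = clen (csnd (csnd c))" using j'(4) ys by simp
    moreover have "\<forall>r<length ys. holds (encode3 (cnth (csnd (csnd c)) r) cx (ys ! r))"
      using j'(5) ys S len by auto
    ultimately show ?thesis by (rule holds_Cn[OF 3])
  next
    case 4
    with J' obtain cx0: "cx \<noteq> 0" and
      pr: "if chd cx = 0 then encode3 (cfst (csnd c)) (ctl cx) y \<in> S
        else (\<exists>j'\<in>S. cfst j' = c \<and> snd3 j' = ccons (chd cx - 1) (ctl cx) \<and>
           encode3 (csnd (csnd c)) (ccons (chd cx - 1) (ccons (thd3 j') (ctl cx))) y \<in> S)"
      by (simp add: justified_def Let_def) blast
    show ?thesis
    proof (cases "chd cx = 0")
      case True
      with pr S show ?thesis by (intro holds_Pr0[OF 4 cx0]) auto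
    next
      case False
      with pr obtain j' where j': "j' \<in> S" "cfst j' = c" "snd3 j' = ccons (chd cx - 1) (ctl cx)"
        "encode3 (csnd (csnd c)) (ccons (chd cx - 1) (ccons (thd3 j') (ctl cx))) y \<in> S" by auto
      have "holds (encode3 c (ccons (chd cx - 1) (ctl cx)) (thd3 j'))"
        using j'(1-3) S by (metis encode3_parts)
      with j'(4) S show ?thesis by (intro holds_PrS[OF 4 cx0 False]) auto
    qed
  next
    case 5
    with J' have zero: "encode3 (csnd c) (ccons y cx) 0 \<in> S"
      and below: "\<forall>m<y. \<exists>j'\<in>S. cfst j' = csnd c \<and> snd3 j' = ccons m cx \<and> thd3 j' \<noteq> 0"
      by (simp_all add: justified_def Let_def)
    have "\<exists>z. holds (encode3 (csnd c) (ccons m cx) (Suc z))" if "m < y" for m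
    proof -
      from below that obtain j' where j': "j' \<in> S" "cfst j' = csnd c" "snd3 j' = ccons m cx" "thd3 j' \<noteq> 0"
        by blast
      then have "holds (encode3 (csnd c) (ccons m cx) (Suc (thd3 j' - 1)))"
        using S by (metis Suc_pred' encode3_parts neq0_conv)
      then show ?thesis ..
    qed
    with zero S show ?thesis by (intro holds_Mn[OF 5]) auto
  next
    case 6
    with J' show ?thesis
      by (simp add: justified_def Let_def holds_encode3 decode_recf_Zr eval_Zr)
  qed
  then show ?thesis using j by simp
qed

lemma holds_if_in_valid_trace: "valid_trace L \<Longrightarrow> j \<in> set L \<Longrightarrow> holds j"
proof -
  assume v: "valid_trace L"
  have "\<forall>j\<in>set (take i L). holds j" for i
  proof (induction i)
    case 0 then show ?case by simp
  next
    case (Suc i)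
    show ?case
    proof (cases "i < length L")
      case True
      then have "take (Suc i) L = take i L @ [L!i]" by (simp add: take_Suc_conv_app_nth)
      moreover have "holds (L!i)" using v True Suc holds_if_justified unfolding valid_trace_def by blast
      ultimately show ?thesis using Suc by simp
    next
      case False then show ?thesis using Suc by simp
    qed
  qed
  then show "j \<in> set L \<Longrightarrow> holds j" by (metis take_all order_refl)
qed

abbreviation judgement :: "recf \<Rightarrow> nat list \<Rightarrow> nat \<Rightarrow> nat" where
  "judgement f xs y \<equiv> encode3 (encode_recf f) (list_encode xs) y"

lemma cfst_csnd_encode_recf[simp]:
  "cfst (encode_recf Zr) = 0" "cfst (encode_recf Sc) = 1" "cfst (encode_recf (Proj i)) = 2" "cfst (encode_recf (Cn f gs)) = 3"
  "cfst (encode_recf (Pr f g)) = 4" "cfst (encode_recf (Mn f)) = 5"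
  "csnd (encode_recf (Proj i)) = i" "csnd (encode_recf (Cn f gs)) = prod_encode (encode_recf f, list_encode (map encode_recf gs))"
  "csnd (encode_recf (Pr f g)) = prod_encode (encode_recf f, encode_recf g)" "csnd (encode_recf (Mn f)) = encode_recf f"
  by simp_all

declare encode_recf.simps[simp del]

lemma valid_trace_collect_list:
  assumes "list_all2 (\<lambda>g y. \<exists>L. valid_trace L \<and> judgement g xs y \<in> set L) gs ys"
  shows "\<exists>L. valid_trace L \<and> (\<forall>r<length gs. judgement (gs!r) xs (ys!r) \<in> set L)"
  using assms
proof (induction rule: list_all2_induct)
  case Nil then show ?case by (intro exI[of _ "[]"]) simp
next
  case (Cons g gs y ys)
  then obtain L1 L2 where "valid_trace L1" "judgement g xs y \<in> set L1" "valid_trace L2" "\<forall>r<length gs. judgement (gs!r) xs (ys!r) \<in> set L2"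
    by blast
  then show ?case
    by (intro exI[of _ "L1 @ L2"]) (auto simp: valid_trace_append nth_Cons' less_Suc_eq_0_disj)
qed

lemma valid_trace_collect_Mn:
  assumes "\<forall>m<n. \<exists>z L. valid_trace L \<and> judgement f (m # xs) (Suc z) \<in> set L"
  shows "\<exists>L. valid_trace L \<and> (\<forall>m<n. \<exists>z. judgement f (m # xs) (Suc z) \<in> set L)"
  using assms
proof (induction n)
  case 0 then show ?case by (intro exI[of _ "[]"]) simp
next
  case (Suc n)
  then obtain L1 where L1: "valid_trace L1" "\<forall>m<n. \<exists>z. judgement f (m # xs) (Suc z) \<in> set L1" by auto
  from Suc.prems obtain z L2 where L2: "valid_trace L2" "judgement f (n # xs) (Suc z) \<in> set L2" by blast
  show ?case
    by (rule exI[of _ "L1 @ L2"]) (use L1 L2 in \<open>auto simp: valid_trace_append less_Suc_eq\<close>)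
qed

lemma eval_in_valid_trace: "eval f xs y \<Longrightarrow> \<exists>L. valid_trace L \<and> judgement f xs y \<in> set L"
proof (induction rule: eval.induct)
  case (eval_Zr xs)
  show ?case by (rule exI[of _ "[judgement Zr xs 0]"]) (simp add: valid_trace_def justified_def)
next
  case (eval_Sc x xs)
  show ?case by (rule exI[of _ "[judgement Sc (x#xs) (Suc x)]"]) (simp add: valid_trace_def justified_def chd_def)
next
  case (eval_Proj i xs)
  show ?case by (rule exI[of _ "[judgement (Proj i) xs (xs!i)]"]) (use eval_Proj in \<open>simp add: valid_trace_def justified_def\<close>)
next
  case (eval_Cn xs gs ys f z)
  have "list_all2 (\<lambda>g y. \<exists>L. valid_trace L \<and> judgement g xs y \<in> set L) gs ys"
    using eval_Cn.IH(1) by (rule list_all2_mono) auto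
  from valid_trace_collect_list[OF this] obtain L1 where L1: "valid_trace L1" "\<forall>r<length gs. judgement (gs!r) xs (ys!r) \<in> set L1" by blast
  from eval_Cn.IH(2) obtain L2 where L2: "valid_trace L2" "judgement f ys z \<in> set L2" by blast
  have len: "length ys = length gs" using eval_Cn(1) by (simp add: list_all2_lengthD)
  have "justified (judgement (Cn f gs) xs z) (set (L1 @ L2))"
    unfolding justified_def Let_def
    using L1 L2 len by (auto intro!: bexI[of _ "judgement f ys z"])
  then have "valid_trace ((L1 @ L2) @ [judgement (Cn f gs) xs z])"
    using L1 L2 by (intro valid_trace_snoc valid_trace_append)
  then show ?case by (intro exI) auto
next
  case (eval_Pr0 f xs y g)
  then obtain L where L: "valid_trace L" "judgement f xs y \<in> set L" by blast
  have "justified (judgement (Pr f g) (0#xs) y) (set L)" unfolding justified_def Let_def using L by (simp add: ccons_def)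
  then have "valid_trace (L @ [judgement (Pr f g) (0#xs) y])" using L by (intro valid_trace_snoc)
  then show ?case by (intro exI) auto
next
  case (eval_PrS f g n xs y z)
  then obtain L1 L2 where L: "valid_trace L1" "judgement (Pr f g) (n#xs) y \<in> set L1" "valid_trace L2" "judgement g (n # y # xs) z \<in> set L2"
    by blast
  have "justified (judgement (Pr f g) (Suc n#xs) z) (set (L1 @ L2))" unfolding justified_def Let_def using L
    by (auto simp: ccons_def intro!: bexI[of _ "judgement (Pr f g) (n#xs) y"])
  then have "valid_trace ((L1 @ L2) @ [judgement (Pr f g) (Suc n#xs) z])" using L by (intro valid_trace_snoc valid_trace_append)
  then show ?case by (intro exI) auto
next
  case (eval_Mn f n xs)
  then obtain L1 where L1: "valid_trace L1" "judgement f (n#xs) 0 \<in> set L1" by blast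
  have "\<forall>m<n. \<exists>z L. valid_trace L \<and> judgement f (m # xs) (Suc z) \<in> set L" using eval_Mn(3) by blast
  from valid_trace_collect_Mn[OF this] obtain L2 where L2: "valid_trace L2" "\<forall>m<n. \<exists>z. judgement f (m # xs) (Suc z) \<in> set L2" by blast
  have a: "encode3 (encode_recf f) (ccons n (list_encode xs)) 0 \<in> set (L1 @ L2)" using L1 by (simp add: ccons_list_encode)
  have b: "\<forall>m<n. \<exists>j'\<in>set (L1 @ L2). cfst j' = encode_recf f \<and> snd3 j' = ccons m (list_encode xs) \<and> thd3 j' \<noteq> 0"
  proof (intro allI impI)
    fix m assume "m < n"
    then obtain z where "judgement f (m # xs) (Suc z) \<in> set L2" using L2 by blast
    then show "\<exists>j'\<in>set (L1 @ L2). cfst j' = encode_recf f \<and> snd3 j' = ccons m (list_encode xs) \<and> thd3 j' \<noteq> 0"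
      by (intro bexI[of _ "judgement f (m # xs) (Suc z)"]) (auto simp: ccons_list_encode)
  qed
  have "justified (judgement (Mn f) xs n) (set (L1 @ L2))" unfolding justified_def Let_def using a b by simp
  then have "valid_trace ((L1 @ L2) @ [judgement (Mn f) xs n])" using L1 L2 by (intro valid_trace_snoc valid_trace_append)
  then show ?case by (intro exI) auto
qed

lemma eval_deterministic: "eval f xs y \<Longrightarrow> eval f xs z \<Longrightarrow> y = z"
proof (induction arbitrary: z rule: eval.induct)
  case (eval_Zr xs) then show ?case by (cases rule: eval.cases) auto
next
  case (eval_Sc x xs) then show ?case by (cases rule: eval.cases) auto
next
  case (eval_Proj i xs) from eval_Proj.prems show ?case by (cases rule: eval.cases) auto
next
  case (eval_Cn xs gs ys f z z')
  from eval_Cn.prems obtain ys' where ys': "list_all2 (\<lambda>g y. eval g xs y) gs ys'" "eval f ys' z'"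
    by (cases rule: eval.cases) auto
  have "ys = ys'"
    using eval_Cn(1) ys'(1)
    by (auto simp: list_all2_conv_all_nth intro!: nth_equalityI)
  then show ?case using eval_Cn.IH(2)[of z'] ys'(2) by simp
next
  case (eval_Pr0 f xs y g z)
  from eval_Pr0.prems show ?case by (cases rule: eval.cases) (use eval_Pr0 in auto)
next
  case (eval_PrS f g n xs y z z')
  from eval_PrS.prems obtain y' where "eval (Pr f g) (n # xs) y'" "eval g (n # y' # xs) z'"
    by (cases rule: eval.cases) auto
  then show ?case using eval_PrS by metis
next
  case (eval_Mn f n xs z)
  from eval_Mn.prems have z: "eval f (z # xs) 0" "\<forall>m<z. \<exists>y. eval f (m # xs) (Suc y)"
    by (cases rule: eval.cases; fastforce)+
  show ?case
  proof (rule ccontr)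
    assume "n \<noteq> z"
    then consider "n < z" | "z < n" by linarith
    then show False
    proof cases
      case 1
      then obtain y where "eval f (n # xs) (Suc y)" using z by blast
      then show False using eval_Mn(2) by fastforce
    next
      case 2
      then have "\<exists>y. eval f (z # xs) (Suc y) \<and> (\<forall>w. eval f (z # xs) w \<longrightarrow> Suc y = w)"
        using eval_Mn(3) by blast
      then show False using z(1) by fastforce
    qed
  qed
qed


section \<open>Decidability of trace validity\<close>

lemma rec_fn_encode3[rec_intros]: "rec_fn n a \<Longrightarrow> rec_fn n b \<Longrightarrow> rec_fn n c \<Longrightarrow> rec_fn n (\<lambda>xs. encode3 (a xs) (b xs) (c xs))"
  unfolding encode3_def by (intro rec_intros)
lemma rec_fn_snd3[rec_intros]: "rec_fn n a \<Longrightarrow> rec_fn n (\<lambda>xs. snd3 (a xs))"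
  unfolding snd3_def by (intro rec_intros)
lemma rec_fn_thd3[rec_intros]: "rec_fn n a \<Longrightarrow> rec_fn n (\<lambda>xs. thd3 (a xs))"
  unfolding thd3_def by (intro rec_intros)

definition in_prefix :: "nat \<Rightarrow> nat \<Rightarrow> nat \<Rightarrow> bool" where
  "in_prefix P i x \<longleftrightarrow> (\<exists>i'<i. x = cnth P i')"

lemma rec_pred_in_prefix3: "rec_pred 3 (\<lambda>xs. in_prefix (xs!0) (xs!1) (xs!2))"
  by (rule rec_pred_bex[where Q="\<lambda>ws. ws!3 = cnth (ws!1) (ws!0)" and a="\<lambda>xs. xs!1"])
     (auto intro!: rec_intros rec_fn_proj simp: in_prefix_def)

lemma rec_pred_in_prefix[rec_intros]: "rec_fn n a \<Longrightarrow> rec_fn n b \<Longrightarrow> rec_fn n c \<Longrightarrow> rec_pred n (\<lambda>xs. in_prefix (a xs) (b xs) (c xs))"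
  by (rule rec_pred_comp3[OF rec_pred_in_prefix3])

definition cn_args_in_prefix :: "nat \<Rightarrow> nat \<Rightarrow> nat \<Rightarrow> nat \<Rightarrow> nat \<Rightarrow> bool" where
  "cn_args_in_prefix P i cx ys gs \<longleftrightarrow> (\<forall>r<clen gs. in_prefix P i (encode3 (cnth gs r) cx (cnth ys r)))"

lemma rec_pred_cn_args_in_prefix5: "rec_pred 5 (\<lambda>xs. cn_args_in_prefix (xs!0) (xs!1) (xs!2) (xs!3) (xs!4))"
  by (rule rec_pred_ball[where Q="\<lambda>ws. in_prefix (ws!1) (ws!2) (encode3 (cnth (ws!5) (ws!0)) (ws!3) (cnth (ws!4) (ws!0)))" and a="\<lambda>xs. clen (xs!4)"])
     (auto intro!: rec_intros rec_fn_proj simp: cn_args_in_prefix_def)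

lemma rec_pred_cn_args_in_prefix[rec_intros]: "rec_fn n a \<Longrightarrow> rec_fn n b \<Longrightarrow> rec_fn n c \<Longrightarrow> rec_fn n d \<Longrightarrow> rec_fn n e \<Longrightarrow> rec_pred n (\<lambda>xs. cn_args_in_prefix (a xs) (b xs) (c xs) (d xs) (e xs))"
  unfolding rec_pred_def
  by (rule rec_fn_comp_list[OF rec_pred_cn_args_in_prefix5[unfolded rec_pred_def], of "[a,b,c,d,e]"]) (auto simp: eval_nat_numeral)

definition cn_premises_in_prefix :: "nat \<Rightarrow> nat \<Rightarrow> nat \<Rightarrow> nat \<Rightarrow> nat \<Rightarrow> nat \<Rightarrow> bool" where
  "cn_premises_in_prefix P i y f gs cx \<longleftrightarrow> (\<exists>i'<i. cfst (cnth P i') = f \<and> thd3 (cnth P i') = y \<and> clen (snd3 (cnth P i')) = clen gs \<and> cn_args_in_prefix P i cx (snd3 (cnth P i')) gs)"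

lemma rec_pred_cn_premises_in_prefix6: "rec_pred 6 (\<lambda>xs. cn_premises_in_prefix (xs!0) (xs!1) (xs!2) (xs!3) (xs!4) (xs!5))"
  by (rule rec_pred_bex[where Q="\<lambda>ws. cfst (cnth (ws!1) (ws!0)) = ws!4 \<and> thd3 (cnth (ws!1) (ws!0)) = ws!3 \<and> clen (snd3 (cnth (ws!1) (ws!0))) = clen (ws!5) \<and> cn_args_in_prefix (ws!1) (ws!2) (ws!6) (snd3 (cnth (ws!1) (ws!0))) (ws!5)" and a="\<lambda>xs. xs!1"])
     (auto intro!: rec_intros rec_fn_proj simp: cn_premises_in_prefix_def)

lemma rec_pred_cn_premises_in_prefix[rec_intros]: "rec_fn n a \<Longrightarrow> rec_fn n b \<Longrightarrow> rec_fn n c \<Longrightarrow> rec_fn n d \<Longrightarrow> rec_fn n e \<Longrightarrow> rec_fn n f \<Longrightarrow> rec_pred n (\<lambda>xs. cn_premises_in_prefix (a xs) (b xs) (c xs) (d xs) (e xs) (f xs))"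
  unfolding rec_pred_def
  by (rule rec_fn_comp_list[OF rec_pred_cn_premises_in_prefix6[unfolded rec_pred_def], of "[a,b,c,d,e,f]"]) (auto simp: eval_nat_numeral)

definition prS_premises_in_prefix :: "nat \<Rightarrow> nat \<Rightarrow> nat \<Rightarrow> nat \<Rightarrow> nat \<Rightarrow> nat \<Rightarrow> bool" where
  "prS_premises_in_prefix P i c cx y g \<longleftrightarrow> (\<exists>i'<i. cfst (cnth P i') = c \<and> snd3 (cnth P i') = ccons (chd cx - 1) (ctl cx) \<and>
      in_prefix P i (encode3 g (ccons (chd cx - 1) (ccons (thd3 (cnth P i')) (ctl cx))) y))"

lemma rec_pred_prS_premises_in_prefix6: "rec_pred 6 (\<lambda>xs. prS_premises_in_prefix (xs!0) (xs!1) (xs!2) (xs!3) (xs!4) (xs!5))"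
  by (rule rec_pred_bex[where Q="\<lambda>ws. cfst (cnth (ws!1) (ws!0)) = ws!3 \<and> snd3 (cnth (ws!1) (ws!0)) = ccons (chd (ws!4) - 1) (ctl (ws!4)) \<and>
      in_prefix (ws!1) (ws!2) (encode3 (ws!6) (ccons (chd (ws!4) - 1) (ccons (thd3 (cnth (ws!1) (ws!0))) (ctl (ws!4)))) (ws!5))" and a="\<lambda>xs. xs!1"])
     (auto intro!: rec_intros rec_fn_proj simp: prS_premises_in_prefix_def)

lemma rec_pred_prS_premises_in_prefix[rec_intros]: "rec_fn n a \<Longrightarrow> rec_fn n b \<Longrightarrow> rec_fn n c \<Longrightarrow> rec_fn n d \<Longrightarrow> rec_fn n e \<Longrightarrow> rec_fn n f \<Longrightarrow> rec_pred n (\<lambda>xs. prS_premises_in_prefix (a xs) (b xs) (c xs) (d xs) (e xs) (f xs))"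
  unfolding rec_pred_def
  by (rule rec_fn_comp_list[OF rec_pred_prS_premises_in_prefix6[unfolded rec_pred_def], of "[a,b,c,d,e,f]"]) (auto simp: eval_nat_numeral)

definition mn_premise_in_prefix :: "nat \<Rightarrow> nat \<Rightarrow> nat \<Rightarrow> nat \<Rightarrow> nat \<Rightarrow> bool" where
  "mn_premise_in_prefix P i d cx m \<longleftrightarrow> (\<exists>i'<i. cfst (cnth P i') = d \<and> snd3 (cnth P i') = ccons m cx \<and> thd3 (cnth P i') \<noteq> 0)"

lemma rec_pred_mn_premise_in_prefix5: "rec_pred 5 (\<lambda>xs. mn_premise_in_prefix (xs!0) (xs!1) (xs!2) (xs!3) (xs!4))"
  by (rule rec_pred_bex[where Q="\<lambda>ws. cfst (cnth (ws!1) (ws!0)) = ws!3 \<and> snd3 (cnth (ws!1) (ws!0)) = ccons (ws!5) (ws!4) \<and> thd3 (cnth (ws!1) (ws!0)) \<noteq> 0" and a="\<lambda>xs. xs!1"])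
     (auto intro!: rec_intros rec_fn_proj simp: mn_premise_in_prefix_def)

lemma rec_pred_mn_premise_in_prefix[rec_intros]: "rec_fn n a \<Longrightarrow> rec_fn n b \<Longrightarrow> rec_fn n c \<Longrightarrow> rec_fn n d \<Longrightarrow> rec_fn n e \<Longrightarrow> rec_pred n (\<lambda>xs. mn_premise_in_prefix (a xs) (b xs) (c xs) (d xs) (e xs))"
  unfolding rec_pred_def
  by (rule rec_fn_comp_list[OF rec_pred_mn_premise_in_prefix5[unfolded rec_pred_def], of "[a,b,c,d,e]"]) (auto simp: eval_nat_numeral)

definition mn_premises_in_prefix :: "nat \<Rightarrow> nat \<Rightarrow> nat \<Rightarrow> nat \<Rightarrow> nat \<Rightarrow> bool" where
  "mn_premises_in_prefix P i d cx y \<longleftrightarrow> (\<forall>m<y. mn_premise_in_prefix P i d cx m)"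

lemma rec_pred_mn_premises_in_prefix5: "rec_pred 5 (\<lambda>xs. mn_premises_in_prefix (xs!0) (xs!1) (xs!2) (xs!3) (xs!4))"
  by (rule rec_pred_ball[where Q="\<lambda>ws. mn_premise_in_prefix (ws!1) (ws!2) (ws!3) (ws!4) (ws!0)" and a="\<lambda>xs. xs!4"])
     (auto intro!: rec_intros rec_fn_proj simp: mn_premises_in_prefix_def)

lemma rec_pred_mn_premises_in_prefix[rec_intros]: "rec_fn n a \<Longrightarrow> rec_fn n b \<Longrightarrow> rec_fn n c \<Longrightarrow> rec_fn n d \<Longrightarrow> rec_fn n e \<Longrightarrow> rec_pred n (\<lambda>xs. mn_premises_in_prefix (a xs) (b xs) (c xs) (d xs) (e xs))"
  unfolding rec_pred_def
  by (rule rec_fn_comp_list[OF rec_pred_mn_premises_in_prefix5[unfolded rec_pred_def], of "[a,b,c,d,e]"]) (auto simp: eval_nat_numeral)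

definition justified_code :: "nat \<Rightarrow> nat \<Rightarrow> nat \<Rightarrow> bool" where
"justified_code P i j \<longleftrightarrow>
  (if cfst (cfst j) = 1 then snd3 j \<noteq> 0 \<and> thd3 j = Suc (chd (snd3 j))
  else if cfst (cfst j) = 2 then csnd (cfst j) < clen (snd3 j) \<and> thd3 j = cnth (snd3 j) (csnd (cfst j))
  else if cfst (cfst j) = 3 then cn_premises_in_prefix P i (thd3 j) (cfst (csnd (cfst j))) (csnd (csnd (cfst j))) (snd3 j)
  else if cfst (cfst j) = 4 then snd3 j \<noteq> 0 \<and> (if chd (snd3 j) = 0 then in_prefix P i (encode3 (cfst (csnd (cfst j))) (ctl (snd3 j)) (thd3 j))
          else prS_premises_in_prefix P i (cfst j) (snd3 j) (thd3 j) (csnd (csnd (cfst j))))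
  else if cfst (cfst j) = 5 then in_prefix P i (encode3 (csnd (cfst j)) (ccons (thd3 j) (snd3 j)) 0) \<and> mn_premises_in_prefix P i (csnd (cfst j)) (snd3 j) (thd3 j)
  else thd3 j = 0)"

lemma rec_pred_justified_code3: "rec_pred 3 (\<lambda>xs. justified_code (xs!0) (xs!1) (xs!2))"
  unfolding justified_code_def by (intro rec_intros rec_fn_proj) auto

lemma justified_code_iff: "justified_code P i j = justified j (cnth P ` {..<i})"
  unfolding justified_code_def justified_def Let_def cn_premises_in_prefix_def cn_args_in_prefix_def
    prS_premises_in_prefix_def mn_premises_in_prefix_def mn_premise_in_prefix_def in_prefix_def
  by (simp add: Bex_def image_iff) blast

definition valid_trace_code :: "nat \<Rightarrow> bool" where
  "valid_trace_code P \<longleftrightarrow> (\<forall>i<clen P. justified_code P i (cnth P i))"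

lemma rec_pred_valid_trace_code1: "rec_pred 1 (\<lambda>xs. valid_trace_code (xs!0))"
  by (rule rec_pred_ball[where Q="\<lambda>ws. justified_code (ws!1) (ws!0) (cnth (ws!1) (ws!0))" and a="\<lambda>xs. clen (xs!0)"])
     (auto intro!: rec_intros rec_fn_proj rec_pred_comp3[OF rec_pred_justified_code3] simp: valid_trace_code_def)

lemma rec_pred_valid_trace_code[rec_intros]: "rec_fn n a \<Longrightarrow> rec_pred n (\<lambda>xs. valid_trace_code (a xs))"
  by (rule rec_pred_comp1[OF rec_pred_valid_trace_code1])

lemma image_cnth_list_encode: "i \<le> length L \<Longrightarrow> cnth (list_encode L) ` {..<i} = set (take i L)"
proof -
  assume "i \<le> length L"
  then have "cnth (list_encode L) ` {..<i} = (!) L ` {..<i}" by (intro image_cong) auto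
  with \<open>i \<le> length L\<close> show ?thesis by (simp add: nth_image flip: atLeast0LessThan)
qed

lemma valid_trace_code_iff: "valid_trace_code (list_encode L) \<longleftrightarrow> valid_trace L"
proof -
  have "\<forall>i<length L. cnth (list_encode L) ` {..<i} = set (take i L)" using image_cnth_list_encode by simp
  then show ?thesis unfolding valid_trace_code_def valid_trace_def justified_code_iff by simp
qed


definition level :: "nat \<Rightarrow> nat \<Rightarrow> nat" where "level e k = 2^(e+1) * (2*k+1)"

lemma rec_fn_level[rec_intros]: "rec_fn n a \<Longrightarrow> rec_fn n b \<Longrightarrow> rec_fn n (\<lambda>xs. level (a xs) (b xs))"
  unfolding level_def by (intro rec_intros)

lemma level_pos: "0 < level e k"
  by (simp add: level_def)

lemma even_level: "even (level e k)"
  by (simp add: level_def)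

lemma level_less_Suc: "level e k < level e (Suc k)"
  by (simp add: level_def)

lemma level_gt: "e < level e k" "k < level e k"
proof -
  have "e < 2^e" by (rule less_exp)
  also have "\<dots> \<le> 2^(e+1) * (2*k+1)" by simp
  finally show "e < level e k" by (simp add: level_def)
  have "k < 2*k+1" by simp
  also have "\<dots> \<le> 2^(e+1) * (2*k+1)" by (metis mult_le_mono1 mult_1 one_le_numeral one_le_power)
  finally show "k < level e k" by (simp add: level_def)
qed

lemma level_inj: "level e k = level e' k' \<Longrightarrow> e = e' \<and> k = k'"
proof -
  have neq: "level e k \<noteq> level e' k'" if "e < e'" for e e' k k'
  proof
    assume "level e k = level e' k'"
    moreover have "(2::nat)^(e'+1) = 2^(e+1) * 2^(e'-e)" using that by (simp add: power_add[symmetric])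
    ultimately have "(2::nat)^(e+1) * (2*k+1) = 2^(e+1) * (2^(e'-e) * (2*k'+1))"
      unfolding level_def by (metis mult.assoc)
    then have "2*k+1 = 2^(e'-e) * (2*k'+1)" by (subst (asm) mult_left_cancel) simp_all
    moreover have "even ((2::nat)^(e'-e) * (2*k'+1))" using that by simp
    ultimately have "even (2*k+1::nat)" by metis
    then show False by simp
  qed
  assume h: "level e k = level e' k'"
  then have "e = e'" using neq[of e e' k k'] neq[of e' e k' k] by (metis linorder_neqE_nat)
  then show ?thesis using h by (simp add: level_def)
qed

lemma level_bracket: "level e 0 < n \<Longrightarrow> \<exists>k. level e k < n \<and> n \<le> level e (Suc k)"
proof -
  assume n: "level e 0 < n"
  have ex: "\<exists>k. n \<le> level e (Suc k)" using level_gt(2)[of "Suc n" e] by (intro exI[of _ n]) simp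
  define k where "k = (LEAST k. n \<le> level e (Suc k))"
  have k: "n \<le> level e (Suc k)" unfolding k_def by (rule LeastI_ex[OF ex])
  have "level e k < n"
  proof (cases k)
    case 0 then show ?thesis using n by simp
  next
    case (Suc k')
    have "\<not> n \<le> level e (Suc k')" using Suc not_less_Least[of k' "\<lambda>k. n \<le> level e (Suc k)"] unfolding k_def by simp
    then show ?thesis using Suc by simp
  qed
  then show ?thesis using k by blast
qed


section \<open>The construction\<close>

text \<open>Truncated subtraction: \<open>(a - b) + (b - a)\<close> is \<open>\<bar>a - b\<bar>\<close>.\<close>

definition near :: "nat \<Rightarrow> nat \<Rightarrow> nat \<Rightarrow> nat \<Rightarrow> nat \<Rightarrow> nat \<Rightarrow> bool" where
  "near N s va vb vc l \<longleftrightarrow>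
     ((N*(vc+1) + vb*4^s - va*4^s) + (va*4^s - (N*(vc+1) + vb*4^s))) * 2^(l+1) < 4^s*(vc+1)"

lemma rec_pred_near[rec_intros]: "rec_fn n x1 \<Longrightarrow> rec_fn n x2 \<Longrightarrow> rec_fn n x3 \<Longrightarrow> rec_fn n x4 \<Longrightarrow> rec_fn n x5 \<Longrightarrow> rec_fn n x6 \<Longrightarrow>
  rec_pred n (\<lambda>xs. near (x1 xs) (x2 xs) (x3 xs) (x4 xs) (x5 xs) (x6 xs))"
  unfolding near_def by (intro rec_intros)

lemma of_nat_diff_add_diff: "real (x - y) + real (y - x) = \<bar>real x - real y\<bar>"
  by (cases "x \<le> y") (auto simp: of_nat_diff)

lemma near_iff: "near N s va vb vc l \<longleftrightarrow>
   \<bar>real N / 4^s - (real va - real vb) / (real vc + 1)\<bar> < (1/2)^(l+1)"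
proof -
  define A where "A = N*(vc+1) + vb*4^s"
  define B where "B = va*4^s"
  have pos: "(0::real) < 4^s * (real vc + 1)" by simp
  have eq: "real N / 4^s - (real va - real vb) / (real vc + 1) = (real A - real B) / (4^s * (real vc + 1))"
    unfolding A_def B_def by (simp add: field_simps)
  have "near N s va vb vc l \<longleftrightarrow> real (((A - B) + (B - A)) * 2^(l+1)) < real (4^s*(vc+1))"
    unfolding near_def A_def B_def of_nat_less_iff ..
  also have "\<dots> \<longleftrightarrow> \<bar>real A - real B\<bar> * 2^(l+1) < 4^s * (real vc + 1)"
    by (simp only: of_nat_mult of_nat_diff_add_diff of_nat_power of_nat_add of_nat_1 of_nat_numeral)
  also have "\<dots> \<longleftrightarrow> \<bar>(real A - real B) / (4^s * (real vc + 1))\<bar> < (1/2)^(l+1)"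
    using pos by (simp add: abs_divide divide_less_eq power_one_over field_simps)
  finally show ?thesis using eq by simp
qed

definition trace_has :: "nat \<Rightarrow> nat \<Rightarrow> nat \<Rightarrow> nat \<Rightarrow> bool" where
  "trace_has d t m v \<longleftrightarrow> in_prefix d (clen d) (encode3 t (ccons m 0) v)"

lemma rec_pred_trace_has[rec_intros]:
  "rec_fn n a \<Longrightarrow> rec_fn n b \<Longrightarrow> rec_fn n c \<Longrightarrow> rec_fn n e \<Longrightarrow> rec_pred n (\<lambda>xs. trace_has (a xs) (b xs) (c xs) (e xs))"
  unfolding trace_has_def by (intro rec_intros)

lemma in_prefix_list_encode: "in_prefix (list_encode L) (length L) x \<longleftrightarrow> x \<in> set L"
  by (auto simp: in_prefix_def in_set_conv_nth)

lemma ccons_Nil_list_encode: "ccons m 0 = list_encode [m]"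
  by (simp add: ccons_def)

lemma trace_has_list_encode:
  "trace_has (list_encode L) t m v \<longleftrightarrow> encode3 t (list_encode [m]) v \<in> set L"
  by (simp add: trace_has_def in_prefix_list_encode ccons_Nil_list_encode)

lemma eval_if_trace_has: "valid_trace_code d \<Longrightarrow> trace_has d t m v \<Longrightarrow> eval (decode_recf t) [m] v"
proof -
  assume "valid_trace_code d" and "trace_has d t m v"
  moreover obtain L where d: "d = list_encode L" by (metis list_decode_inverse)
  ultimately have "valid_trace L" "encode3 t (list_encode [m]) v \<in> set L"
    by (simp_all add: valid_trace_code_iff trace_has_list_encode)
  then have "holds (encode3 t (list_encode [m]) v)" by (rule holds_if_in_valid_trace)
  then show ?thesis by (simp add: holds_encode3)
qed

definition near_outputs_c :: "nat \<Rightarrow> nat \<Rightarrow> nat \<Rightarrow> nat \<Rightarrow> nat \<Rightarrow> nat \<Rightarrow> nat \<Rightarrow> bool" where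
  "near_outputs_c s N e k d va vb \<longleftrightarrow>
     (\<exists>vc<Suc d. trace_has d (csnd e) (level e (Suc k)) vc \<and> near N s va vb vc (level e k))"

lemma rec_pred_near_outputs_c7: "rec_pred 7 (\<lambda>xs. near_outputs_c (xs!0) (xs!1) (xs!2) (xs!3) (xs!4) (xs!5) (xs!6))"
  by (rule rec_pred_bex[where Q="\<lambda>ws. trace_has (ws!5) (csnd (ws!3)) (level (ws!3) (Suc (ws!4))) (ws!0) \<and> near (ws!2) (ws!1) (ws!6) (ws!7) (ws!0) (level (ws!3) (ws!4))" and a="\<lambda>xs. Suc (xs!4)"])
     (auto intro!: rec_intros rec_fn_proj simp: near_outputs_c_def)

lemma rec_pred_near_outputs_c[rec_intros]: "rec_fn n x1 \<Longrightarrow> rec_fn n x2 \<Longrightarrow> rec_fn n x3 \<Longrightarrow> rec_fn n x4 \<Longrightarrow> rec_fn n x5 \<Longrightarrow> rec_fn n x6 \<Longrightarrow> rec_fn n x7 \<Longrightarrow>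
  rec_pred n (\<lambda>xs. near_outputs_c (x1 xs) (x2 xs) (x3 xs) (x4 xs) (x5 xs) (x6 xs) (x7 xs))"
  unfolding rec_pred_def
  by (rule rec_fn_comp_list[OF rec_pred_near_outputs_c7[unfolded rec_pred_def], of "[x1,x2,x3,x4,x5,x6,x7]"]) (auto simp: eval_nat_numeral)

definition near_outputs_bc :: "nat \<Rightarrow> nat \<Rightarrow> nat \<Rightarrow> nat \<Rightarrow> nat \<Rightarrow> nat \<Rightarrow> bool" where
  "near_outputs_bc s N e k d va \<longleftrightarrow>
     (\<exists>vb<Suc d. trace_has d (csnd (cfst e)) (level e (Suc k)) vb \<and> near_outputs_c s N e k d va vb)"

lemma rec_pred_near_outputs_bc6: "rec_pred 6 (\<lambda>xs. near_outputs_bc (xs!0) (xs!1) (xs!2) (xs!3) (xs!4) (xs!5))"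
  by (rule rec_pred_bex[where Q="\<lambda>ws. trace_has (ws!5) (csnd (cfst (ws!3))) (level (ws!3) (Suc (ws!4))) (ws!0) \<and> near_outputs_c (ws!1) (ws!2) (ws!3) (ws!4) (ws!5) (ws!6) (ws!0)" and a="\<lambda>xs. Suc (xs!4)"])
     (auto intro!: rec_intros rec_fn_proj simp: near_outputs_bc_def)

lemma rec_pred_near_outputs_bc[rec_intros]: "rec_fn n x1 \<Longrightarrow> rec_fn n x2 \<Longrightarrow> rec_fn n x3 \<Longrightarrow> rec_fn n x4 \<Longrightarrow> rec_fn n x5 \<Longrightarrow> rec_fn n x6 \<Longrightarrow>
  rec_pred n (\<lambda>xs. near_outputs_bc (x1 xs) (x2 xs) (x3 xs) (x4 xs) (x5 xs) (x6 xs))"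
  unfolding rec_pred_def
  by (rule rec_fn_comp_list[OF rec_pred_near_outputs_bc6[unfolded rec_pred_def], of "[x1,x2,x3,x4,x5,x6]"]) (auto simp: eval_nat_numeral)

definition near_outputs :: "nat \<Rightarrow> nat \<Rightarrow> nat \<Rightarrow> nat \<Rightarrow> nat \<Rightarrow> bool" where
  "near_outputs s N e k d \<longleftrightarrow>
     (\<exists>va<Suc d. trace_has d (cfst (cfst e)) (level e (Suc k)) va \<and> near_outputs_bc s N e k d va)"

lemma rec_pred_near_outputs5: "rec_pred 5 (\<lambda>xs. near_outputs (xs!0) (xs!1) (xs!2) (xs!3) (xs!4))"
  by (rule rec_pred_bex[where Q="\<lambda>ws. trace_has (ws!5) (cfst (cfst (ws!3))) (level (ws!3) (Suc (ws!4))) (ws!0) \<and> near_outputs_bc (ws!1) (ws!2) (ws!3) (ws!4) (ws!5) (ws!0)" and a="\<lambda>xs. Suc (xs!4)"])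
     (auto intro!: rec_intros rec_fn_proj simp: near_outputs_def)

lemma rec_pred_near_outputs[rec_intros]: "rec_fn n x1 \<Longrightarrow> rec_fn n x2 \<Longrightarrow> rec_fn n x3 \<Longrightarrow> rec_fn n x4 \<Longrightarrow> rec_fn n x5 \<Longrightarrow>
  rec_pred n (\<lambda>xs. near_outputs (x1 xs) (x2 xs) (x3 xs) (x4 xs) (x5 xs))"
  unfolding rec_pred_def
  by (rule rec_fn_comp_list[OF rec_pred_near_outputs5[unfolded rec_pred_def], of "[x1,x2,x3,x4,x5]"]) (auto simp: eval_nat_numeral)

text \<open>A number \<open>e\<close> names the three terms with codes \<open>cfst (cfst e)\<close>, \<open>csnd (cfst e)\<close>,
  \<open>csnd e\<close>, and thus, as in \<open>computable_rat_seq\<close>, the rational sequence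
  \<open>q n = (a n - b n) / (c n + 1)\<close>.\<close>

definition acts :: "nat \<Rightarrow> nat \<Rightarrow> nat \<Rightarrow> nat \<Rightarrow> bool" where
  "acts s N e k \<longleftrightarrow> level e (Suc k) \<le> s \<and> (\<exists>d<Suc s. valid_trace_code d \<and> near_outputs s N e k d)"

lemma rec_pred_acts4: "rec_pred 4 (\<lambda>xs. acts (xs!0) (xs!1) (xs!2) (xs!3))"
proof -
  have "rec_pred 4 (\<lambda>xs. \<exists>d<Suc (xs!0). valid_trace_code d \<and> near_outputs (xs!0) (xs!1) (xs!2) (xs!3) d)"
    by (rule rec_pred_bex[where Q="\<lambda>ws. valid_trace_code (ws!0) \<and> near_outputs (ws!1) (ws!2) (ws!3) (ws!4) (ws!0)" and a="\<lambda>xs. Suc (xs!0)"])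
       (auto intro!: rec_intros rec_fn_proj)
  then show ?thesis
    unfolding acts_def by (intro rec_pred_and) (auto intro!: rec_intros rec_fn_proj)
qed

lemma rec_pred_acts[rec_intros]: "rec_fn n x1 \<Longrightarrow> rec_fn n x2 \<Longrightarrow> rec_fn n x3 \<Longrightarrow> rec_fn n x4 \<Longrightarrow>
  rec_pred n (\<lambda>xs. acts (x1 xs) (x2 xs) (x3 xs) (x4 xs))"
  unfolding rec_pred_def
  by (rule rec_fn_comp_list[OF rec_pred_acts4[unfolded rec_pred_def], of "[x1,x2,x3,x4]"]) (auto simp: eval_nat_numeral)

lemma acts_bounds: "acts s N e k \<Longrightarrow> e < s \<and> k < s \<and> level e k < s"
  using level_gt(1)[of e "Suc k"] level_gt(2)[of "Suc k" e] level_less_Suc[of e k] unfolding acts_def by auto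

lemma acts_eval: "acts s N e k \<Longrightarrow> \<exists>va vb vc.
   eval (decode_recf (cfst (cfst e))) [level e (Suc k)] va \<and> eval (decode_recf (csnd (cfst e))) [level e (Suc k)] vb \<and>
   eval (decode_recf (csnd e)) [level e (Suc k)] vc \<and>
   \<bar>real N / 4^s - (real va - real vb) / (real vc + 1)\<bar> < (1/2)^(level e k + 1)"
  unfolding acts_def near_outputs_def near_outputs_bc_def near_outputs_c_def near_iff
  by (meson eval_if_trace_has)

lemma le_encode3: "c \<le> encode3 a b c"
  unfolding encode3_def using le_prod_encode_2 le_trans by blast

lemma acts_if_near:
  fixes ta tb tc :: recf
  defines "e \<equiv> prod_encode (prod_encode (encode_recf ta, encode_recf tb), encode_recf tc)"
  assumes "eval ta [level e (Suc k)] va" "eval tb [level e (Suc k)] vb" "eval tc [level e (Suc k)] vc"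
  shows "\<exists>D. \<forall>s N. D \<le> s \<longrightarrow> \<bar>real N / 4^s - (real va - real vb) / (real vc + 1)\<bar> < (1/2)^(level e k + 1)
    \<longrightarrow> acts s N e k"
proof -
  define m where "m = level e (Suc k)"
  obtain L1 L2 L3 where L: "valid_trace L1" "valid_trace L2" "valid_trace L3"
    "judgement ta [m] va \<in> set L1" "judgement tb [m] vb \<in> set L2" "judgement tc [m] vc \<in> set L3"
    using assms(2-4) eval_in_valid_trace unfolding m_def by metis
  define d where "d = list_encode (L1 @ L2 @ L3)"
  have valid: "valid_trace_code d" using L by (simp add: d_def valid_trace_code_iff valid_trace_append)
  have has: "trace_has d (encode_recf ta) m va" "trace_has d (encode_recf tb) m vb" "trace_has d (encode_recf tc) m vc"
    using L by (simp_all add: d_def trace_has_list_encode)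
  have "v < Suc d" if "judgement t [m] v \<in> set (L1 @ L2 @ L3)" for t v
    using le_less_trans[OF le_encode3 mem_less_list_encode[OF that]] by (simp add: d_def)
  then have small: "va < Suc d" "vb < Suc d" "vc < Suc d"
    using L by auto
  have e: "cfst (cfst e) = encode_recf ta" "csnd (cfst e) = encode_recf tb" "csnd e = encode_recf tc"
    by (simp_all add: e_def)
  show ?thesis
  proof (intro exI[of _ "max d m"] allI impI)
    fix s N assume s: "max d m \<le> s"
      and close: "\<bar>real N / 4^s - (real va - real vb) / (real vc + 1)\<bar> < (1/2)^(level e k + 1)"
    have "near_outputs s N e k d"
      unfolding near_outputs_def near_outputs_bc_def near_outputs_c_def e m_def[symmetric]
      using small has close by (auto simp: near_iff)
    then show "acts s N e k" unfolding acts_def m_def[symmetric]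
      using s valid by (auto intro!: exI[of _ d])
  qed
qed

definition increment_at :: "nat \<Rightarrow> nat \<Rightarrow> nat \<Rightarrow> nat" where
  "increment_at s N e = (\<Sum>k<s. if acts s N e k then 2^(2*s+2 - level e k) else 0)"

lemma rec_fn_increment_at3: "rec_fn 3 (\<lambda>xs. increment_at (xs!0) (xs!1) (xs!2))"
  by (rule rec_fn_sum[where F="\<lambda>ws. if acts (ws!1) (ws!2) (ws!3) (ws!0) then 2^(2*(ws!1)+2 - level (ws!3) (ws!0)) else 0" and a="\<lambda>xs. xs!0"])
     (auto intro!: rec_intros rec_fn_proj sum.cong simp: increment_at_def numeral_eq_Suc)

lemma rec_fn_increment_at[rec_intros]:
  "rec_fn n x1 \<Longrightarrow> rec_fn n x2 \<Longrightarrow> rec_fn n x3 \<Longrightarrow> rec_fn n (\<lambda>xs. increment_at (x1 xs) (x2 xs) (x3 xs))"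
  using rec_fn_comp3[OF rec_fn_increment_at3] by simp

definition increment :: "nat \<Rightarrow> nat \<Rightarrow> nat" where
  "increment s N = (\<Sum>e<Suc s. increment_at s N e)"

lemma rec_fn_increment2: "rec_fn 2 (\<lambda>xs. increment (xs!0) (xs!1))"
  by (rule rec_fn_sum[where F="\<lambda>ws. increment_at (ws!1) (ws!2) (ws!0)" and a="\<lambda>xs. Suc (xs!0)"])
     (auto intro!: rec_intros rec_fn_proj simp: increment_def)

lemma rec_fn_increment[rec_intros]: "rec_fn n x1 \<Longrightarrow> rec_fn n x2 \<Longrightarrow> rec_fn n (\<lambda>xs. increment (x1 xs) (x2 xs))"
  using rec_fn_comp2[OF rec_fn_increment2] by simp

primrec numer :: "nat \<Rightarrow> nat" where
  "numer 0 = 0"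
| "numer (Suc s) = 4 * numer s + 2 + increment s (numer s)"

lemma computable_fun_if_rec_fn: "rec_fn 1 (\<lambda>xs. f (xs!0)) \<Longrightarrow> computable_fun f"
  unfolding rec_fn_def computable_fun_def
  by (metis One_nat_def length_Cons list.size(3) nth_Cons_0)

lemma computable_numer: "computable_fun numer"
proof (rule computable_fun_if_rec_fn)
  have "rec_fn (Suc 0) (\<lambda>xs. numer (xs!0))"
    by (rule rec_fn_prim_rec[where f="\<lambda>ys. 0" and g="\<lambda>zs. 4 * zs!1 + 2 + increment (zs!0) (zs!1)"])
       (auto intro!: rec_intros rec_fn_proj)
  then show "rec_fn 1 (\<lambda>xs. numer (xs!0))" by simp
qed

section \<open>The approximations and their limit\<close>

definition approx :: "nat \<Rightarrow> real" where "approx s = real (numer s) / 4^s"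

definition active :: "nat \<Rightarrow> (nat \<times> nat) set" where
  "active s = {(e,k). e < Suc s \<and> k < s \<and> acts s (numer s) e k}"

definition levels :: "nat \<Rightarrow> nat set" where
  "levels s = insert (2*s+1) ((\<lambda>(e,k). level e k) ` active s)"

lemma finite_active: "finite (active s)"
  by (rule finite_subset[of _ "{..<Suc s} \<times> {..<s}"]) (auto simp: active_def)

lemma finite_levels: "finite (levels s)"
  by (simp add: levels_def finite_active)

lemma levels_pos: "l \<in> levels s \<Longrightarrow> 0 < l"
  unfolding levels_def using level_pos by auto

lemma two_power_div_four_power: "l \<le> 2*s+2 \<Longrightarrow> (2::real)^(2*s+2-l) / 4^(Suc s) = (1/2)^l"
proof -
  assume l: "l \<le> 2*s+2"
  have "(2::real)^(2*(Suc s)) = (2^2)^(Suc s)" by (rule power_mult)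
  then have "(4::real)^(Suc s) = 2^(2*s+2)" by simp
  also have "\<dots> = 2^(2*s+2-l) * 2^l" using l by (simp add: power_add[symmetric])
  finally show ?thesis by (simp add: power_one_over)
qed

lemma increment_div: "real (increment s (numer s)) / 4^(Suc s) = (\<Sum>(e,k)\<in>active s. (1/2)^(level e k))"
proof -
  have "real (increment s (numer s)) / 4^(Suc s)
      = (\<Sum>(e,k)\<in>{..<Suc s} \<times> {..<s}. real (if acts s (numer s) e k then 2^(2*s+2 - level e k) else 0) / 4^(Suc s))"
    unfolding increment_def increment_at_def
    by (simp only: of_nat_sum sum_divide_distrib sum.cartesian_product) (simp add: case_prod_beta)
  also have "\<dots> = (\<Sum>(e,k)\<in>{..<Suc s} \<times> {..<s}. if acts s (numer s) e k then (1/2)^(level e k) else 0)"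
  proof (intro sum.cong refl, clarify)
    fix e k
    show "real (if acts s (numer s) e k then 2^(2*s+2 - level e k) else 0) / 4^(Suc s)
      = (if acts s (numer s) e k then (1/2)^(level e k) else 0)"
    proof (cases "acts s (numer s) e k")
      case True
      then have "level e k \<le> 2*s+2" using acts_bounds by fastforce
      with True show ?thesis by (simp add: two_power_div_four_power[symmetric])
    qed simp
  qed
  also have "\<dots> = (\<Sum>(e,k)\<in>active s. (1/2)^(level e k))"
    by (simp add: sum.If_cases case_prod_beta active_def) (rule sum.cong; auto)
  finally show ?thesis .
qed

lemma level_neq_odd: "level e k \<noteq> 2*s+1"
  using even_level[of e k] by auto

lemma odd_neq_level: "2*s+1 \<noteq> level e k"
  using level_neq_odd by metis

lemma approx_Suc_minus: "approx (Suc s) - approx s = (\<Sum>l\<in>levels s. (1/2)^l)"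
proof -
  have inj: "inj_on (\<lambda>(e,k). level e k) (active s)"
    by (auto simp: inj_on_def dest: level_inj)
  have "approx (Suc s) - approx s = 2 / 4^(Suc s) + real (increment s (numer s)) / 4^(Suc s)"
    by (simp add: approx_def add_divide_distrib)
  also have "2 / 4^(Suc s) = (1/2::real)^(2*s+1)"
    using two_power_div_four_power[of "2*s+1" s] by simp
  also have "real (increment s (numer s)) / 4^(Suc s) = (\<Sum>l\<in>(\<lambda>(e,k). level e k) ` active s. (1/2)^l)"
    unfolding increment_div by (subst sum.reindex[OF inj]) (auto simp: case_prod_beta)
  also have "(1/2)^(2*s+1) + \<dots> = (\<Sum>l\<in>levels s. (1/2)^l)"
    unfolding levels_def using finite_active level_neq_odd by (subst sum.insert) (auto simp: eq_commute)
  finally show ?thesis .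
qed

lemma half_power_le_approx_Suc_minus: "l \<in> levels s \<Longrightarrow> (1/2)^l \<le> approx (Suc s) - approx s"
  unfolding approx_Suc_minus by (rule member_le_sum) (auto simp: finite_levels)

lemma approx_less_Suc: "approx s < approx (Suc s)"
proof -
  have "(1/2::real)^(2*s+1) \<le> approx (Suc s) - approx s"
    by (rule half_power_le_approx_Suc_minus) (simp add: levels_def)
  moreover have "(0::real) < (1/2)^(2*s+1)" by simp
  ultimately show ?thesis by linarith
qed

lemma strict_mono_approx: "strict_mono approx"
  unfolding strict_mono_Suc_iff by (simp add: approx_less_Suc)

lemma acts_jump: "acts s (numer s) e k \<Longrightarrow> approx s + (1/2)^(level e k) \<le> approx (Suc s)"
  using acts_bounds[of s "numer s" e k] half_power_le_approx_Suc_minus[of "level e k" s]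
  unfolding levels_def active_def by force

text \<open>Once a requirement has acted, the approximations have left the interval in which it
  would act again.\<close>

lemma acts_at_most_once:
  assumes a: "acts s (numer s) e k" and b: "acts t (numer t) e k" and st: "s < t"
  shows False
proof -
  from acts_eval[OF a] obtain va vb vc where A:
    "eval (decode_recf (cfst (cfst e))) [level e (Suc k)] va" "eval (decode_recf (csnd (cfst e))) [level e (Suc k)] vb"
    "eval (decode_recf (csnd e)) [level e (Suc k)] vc"
    "\<bar>approx s - (real va - real vb) / (real vc + 1)\<bar> < (1/2)^(level e k + 1)"
    unfolding approx_def by blast
  from acts_eval[OF b] obtain va' vb' vc' where B:
    "eval (decode_recf (cfst (cfst e))) [level e (Suc k)] va'" "eval (decode_recf (csnd (cfst e))) [level e (Suc k)] vb'"
    "eval (decode_recf (csnd e)) [level e (Suc k)] vc'"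
    "\<bar>approx t - (real va' - real vb') / (real vc' + 1)\<bar> < (1/2)^(level e k + 1)"
    unfolding approx_def by blast
  have "va' = va" "vb' = vb" "vc' = vc" using A B eval_deterministic by blast+
  with B(4) have "\<bar>approx t - (real va - real vb) / (real vc + 1)\<bar> < (1/2)^(level e k + 1)" by simp
  moreover have "approx s + 2 * (1/2)^(level e k + 1) \<le> approx t"
    using acts_jump[OF a] strict_mono_less_eq[OF strict_mono_approx, of "Suc s" t] st by simp
  ultimately show False using A(4) by linarith
qed

lemma levels_disjoint: "s \<noteq> t \<Longrightarrow> levels s \<inter> levels t = {}"
proof -
  assume st: "s \<noteq> t"
  have "l \<notin> levels t" if ls: "l \<in> levels s" for l
  proof
    assume lt: "l \<in> levels t"
    show False
    proof (cases "l = 2*s+1")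
      case True
      then show False using lt st odd_neq_level unfolding levels_def by auto
    next
      case False
      then obtain e k where ek: "(e,k) \<in> active s" "l = level e k" using ls unfolding levels_def by auto
      then obtain e' k' where ek': "(e',k') \<in> active t" "l = level e' k'"
        using lt level_neq_odd unfolding levels_def by auto
      then have "e' = e" "k' = k" using ek level_inj by metis+
      then have "acts s (numer s) e k" "acts t (numer t) e k" using ek ek' by (auto simp: active_def)
      then show False using acts_at_most_once st by (metis linorder_neqE_nat)
    qed
  qed
  then show ?thesis by blast
qed

lemma sum_half_power_greaterThanAtMost: "m \<le> M \<Longrightarrow> (\<Sum>l\<in>{m<..M}. (1/2::real)^l) = (1/2)^m - (1/2)^M"
proof (induction M)
  case (Suc M)
  show ?case
  proof (cases "m = Suc M")
    case False
    then have "m \<le> M" "{m<..Suc M} = insert (Suc M) {m<..M}" using Suc by auto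
    then show ?thesis using Suc.IH by simp
  qed simp
qed simp

lemma sum_half_power_le:
  assumes "finite F" and "\<forall>l\<in>F. m < l"
  shows "(\<Sum>l\<in>F. (1/2::real)^l) \<le> (1/2)^m"
proof -
  define M where "M = max m (Max (insert m F))"
  have "F \<subseteq> {m<..M}" using assms by (auto simp: M_def)
  then have "(\<Sum>l\<in>F. (1/2::real)^l) \<le> (\<Sum>l\<in>{m<..M}. (1/2::real)^l)"
    by (intro sum_mono2) auto
  also have "\<dots> = (1/2)^m - (1/2)^M" by (rule sum_half_power_greaterThanAtMost) (simp add: M_def)
  also have "\<dots> \<le> (1/2)^m" by simp
  finally show ?thesis .
qed

lemma approx_minus: "s \<le> t \<Longrightarrow> approx t - approx s = (\<Sum>l\<in>(\<Union>u\<in>{s..<t}. levels u). (1/2)^l)"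
proof -
  assume "s \<le> t"
  then have "approx t - approx s = (\<Sum>u\<in>{s..<t}. approx (Suc u) - approx u)"
    by (simp add: sum_Suc_diff')
  also have "\<dots> = (\<Sum>u\<in>{s..<t}. \<Sum>l\<in>levels u. (1/2)^l)" by (simp add: approx_Suc_minus)
  also have "\<dots> = (\<Sum>l\<in>(\<Union>u\<in>{s..<t}. levels u). (1/2)^l)"
    by (rule sum.UNION_disjoint[symmetric]) (auto simp: finite_levels dest: levels_disjoint)
  finally show ?thesis .
qed

lemma approx_le_1: "approx s \<le> 1"
proof -
  have "approx s - approx 0 = (\<Sum>l\<in>(\<Union>u\<in>{0..<s}. levels u). (1/2)^l)" by (rule approx_minus) simp
  also have "\<dots> \<le> (1/2)^0" by (rule sum_half_power_le) (auto simp: finite_levels levels_pos)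
  finally show ?thesis by (simp add: approx_def)
qed

definition xlim :: real where "xlim = lim approx"

lemma approx_tendsto_xlim: "approx \<longlonglongrightarrow> xlim"
proof -
  have "incseq approx" using strict_mono_approx by (simp add: incseq_def strict_mono_less_eq)
  then obtain L where "approx \<longlonglongrightarrow> L" using incseq_convergent[of approx 1] approx_le_1 by blast
  then show ?thesis unfolding xlim_def by (simp add: limI)
qed

lemma approx_less_xlim: "approx s < xlim"
proof -
  have "approx (Suc s) \<le> xlim"
    using strict_mono_approx approx_tendsto_xlim
    by (intro incseq_le) (auto simp: incseq_def strict_mono_less_eq)
  then show ?thesis using approx_less_Suc[of s] by linarith
qed

section \<open>Speedability and failure of regaining approximability\<close>

definition min_level :: "nat \<Rightarrow> nat" where "min_level t = Min (levels t)"

lemma min_level_in: "min_level t \<in> levels t"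
  unfolding min_level_def by (rule Min_in) (simp_all add: finite_levels levels_def finite_active)

lemma min_level_le: "l \<in> levels t \<Longrightarrow> min_level t \<le> l"
  unfolding min_level_def by (rule Min_le) (auto simp: finite_levels)

text \<open>Take the stage \<open>s \<ge> N\<close> with the smallest minimal level: all later stages only use
  larger levels, so together they add at most \<open>2^-min_level s\<close>.\<close>

lemma frequently_tail_le_increment: "\<exists>s\<ge>N. xlim - approx (Suc s) \<le> approx (Suc s) - approx s"
proof -
  obtain s where s: "s \<ge> N" and least: "\<And>t. t \<ge> N \<Longrightarrow> min_level s \<le> min_level t"
    using ex_has_least_nat[of "\<lambda>t. t \<ge> N" N min_level] by blast
  have gt: "min_level s < l" if "t > s" "l \<in> levels t" for t l
  proof -
    have "min_level s \<le> l" using least[of t] s that min_level_le[of l t] by simp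
    moreover have "l \<noteq> min_level s" using levels_disjoint[of s t] min_level_in[of s] that by auto
    ultimately show ?thesis by simp
  qed
  have bound: "approx T - approx (Suc s) \<le> (1/2)^(min_level s)" if "T \<ge> Suc s" for T
  proof -
    have "approx T - approx (Suc s) = (\<Sum>l\<in>(\<Union>u\<in>{Suc s..<T}. levels u). (1/2)^l)"
      by (rule approx_minus) (use that in simp)
    also have "\<dots> \<le> (1/2)^(min_level s)"
      by (rule sum_half_power_le) (auto simp: finite_levels Suc_le_eq intro: gt)
    finally show ?thesis .
  qed
  have "xlim - approx (Suc s) \<le> (1/2)^(min_level s)"
  proof (rule LIMSEQ_le_const2)
    show "(\<lambda>T. approx T - approx (Suc s)) \<longlonglongrightarrow> xlim - approx (Suc s)"
      by (intro tendsto_intros approx_tendsto_xlim)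
    show "\<exists>N. \<forall>n\<ge>N. approx n - approx (Suc s) \<le> (1/2)^(min_level s)" using bound by blast
  qed
  also have "\<dots> \<le> approx (Suc s) - approx s" by (rule half_power_le_approx_Suc_minus[OF min_level_in])
  finally show ?thesis using s by blast
qed

lemma computable_rat_seq_approx: "computable_rat_seq (\<lambda>s. of_nat (numer s) / of_nat (4^s))"
proof -
  have "computable_fun (\<lambda>s. 4^s - 1)" "computable_fun (\<lambda>s. 0)"
    by (auto intro!: computable_fun_if_rec_fn rec_intros rec_fn_proj)
  moreover have "of_nat (numer s) / of_nat (4^s) = (of_nat (numer s) - of_nat 0) / (of_nat (Suc (4^s - 1)) :: rat)" for s
    by simp
  ultimately show ?thesis
    unfolding computable_rat_seq_def using computable_numer by blast
qed

lemma speedable_xlim: "speedable xlim"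
proof -
  define q :: "nat \<Rightarrow> rat" where "q s = of_nat (numer s) / of_nat (4^s)" for s
  have q: "real_of_rat (q s) = approx s" for s
    by (simp add: q_def approx_def of_rat_divide of_rat_power)
  have cq: "computable_rat_seq q" using computable_rat_seq_approx by (simp add: q_def[abs_def])
  have sm: "strict_mono q"
    using strict_mono_approx unfolding strict_mono_def by (simp flip: q add: of_rat_less)
  have lim: "(\<lambda>n. real_of_rat (q n)) \<longlonglongrightarrow> xlim" by (simp add: q approx_tendsto_xlim)
  have "\<exists>\<^sub>F n in sequentially. (xlim - real_of_rat (q (Suc n))) / (xlim - real_of_rat (q n)) \<le> 1/2"
    unfolding frequently_sequentially
  proof
    fix N
    obtain s where s: "s \<ge> N" "xlim - approx (Suc s) \<le> approx (Suc s) - approx s"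
      using frequently_tail_le_increment by blast
    have "0 < xlim - approx s" using approx_less_xlim[of s] by simp
    with s(2) have "(xlim - approx (Suc s)) / (xlim - approx s) \<le> 1/2"
      by (simp add: divide_le_eq)
    then show "\<exists>n\<ge>N. (xlim - real_of_rat (q (Suc n))) / (xlim - real_of_rat (q n)) \<le> 1/2"
      using s(1) by (auto simp: q)
  qed
  moreover have "left_computable xlim"
    unfolding left_computable_def using cq sm lim strict_mono_mono by blast
  ultimately show ?thesis
    unfolding speedable_def using cq sm lim by (intro conjI exI[of _ "1/2"] exI[of _ q]) auto
qed

lemma real_of_rat_quotient:
  "real_of_rat ((of_nat a - of_nat b) / of_nat (Suc c)) = (real a - real b) / (real c + 1)"
  by (simp add: of_rat_divide of_rat_diff of_rat_add)

lemma xlim_far_above_level_values: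
  fixes ta tb tc :: recf and a b c :: "nat \<Rightarrow> nat"
  defines "e \<equiv> prod_encode (prod_encode (encode_recf ta, encode_recf tb), encode_recf tc)"
    and "q \<equiv> \<lambda>n. (real (a n) - real (b n)) / (real (c n) + 1)"
  assumes "\<forall>n. eval ta [n] (a n)" "\<forall>n. eval tb [n] (b n)" "\<forall>n. eval tc [n] (c n)"
    and below: "q (level e (Suc k)) \<le> xlim"
  shows "(1/2)^(level e k + 1) \<le> xlim - q (level e (Suc k))"
proof (rule ccontr)
  define m where "m = level e (Suc k)"
  define r where "r = (1/2::real)^(level e k + 1)"
  have r: "0 < r" by (simp add: r_def)
  assume "\<not> ?thesis"
  then have close: "xlim < q m + r" unfolding r_def m_def by simp
  obtain D where D: "\<And>s N. D \<le> s \<Longrightarrow> \<bar>real N / 4^s - q m\<bar> < r \<Longrightarrow> acts s N e k"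
    using acts_if_near[of ta tb tc k "a m" "b m" "c m"] assms(3-5)
    unfolding e_def[symmetric] m_def[symmetric] r_def q_def by blast
  have "\<forall>\<^sub>F s in sequentially. q m - r < approx s"
    using approx_tendsto_xlim below r unfolding m_def by (intro order_tendstoD(1)) auto
  then obtain s where s: "D \<le> s" "q m - r < approx s" by (metis eventually_sequentially nat_le_linear)
  have "\<bar>approx s - q m\<bar> < r" using s(2) close approx_less_xlim[of s] by linarith
  then have "acts s (numer s) e k" using D[OF s(1)] by (simp add: approx_def)
  then have "approx s + 2 * r \<le> approx (Suc s)" using acts_jump by (simp add: r_def)
  then show False using s(2) close approx_less_xlim[of "Suc s"] by linarith
qed

lemma not_regainingly_approximable_xlim: "\<not> regainingly_approximable xlim"
proof
  assume "regainingly_approximable xlim"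
  then obtain q where cq: "computable_rat_seq q" and mq: "mono q"
    and lim: "(\<lambda>n. real_of_rat (q n)) \<longlonglongrightarrow> xlim"
    and regains: "\<exists>\<^sub>F n in sequentially. xlim - real_of_rat (q n) < 2 powi (- int n)"
    unfolding regainingly_approximable_def by blast
  from cq obtain a b c where "computable_fun a" "computable_fun b" "computable_fun c"
    and q: "\<And>n. real_of_rat (q n) = (real (a n) - real (b n)) / (real (c n) + 1)"
    unfolding computable_rat_seq_def by (metis real_of_rat_quotient)
  then obtain ta tb tc where t: "\<forall>n. eval ta [n] (a n)" "\<forall>n. eval tb [n] (b n)" "\<forall>n. eval tc [n] (c n)"
    unfolding computable_fun_def by blast
  define e where "e = prod_encode (prod_encode (encode_recf ta, encode_recf tb), encode_recf tc)"
  have inc: "incseq (\<lambda>n. real_of_rat (q n))"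
    using mq unfolding incseq_def mono_def by (simp add: of_rat_less_eq)
  have far: "(1/2)^(level e k + 1) \<le> xlim - real_of_rat (q (level e (Suc k)))" for k
    using xlim_far_above_level_values[OF t] incseq_le[OF inc lim] unfolding e_def q by blast
  have "\<not> xlim - real_of_rat (q n) < 2 powi (- int n)" if n: "level e 0 < n" for n
  proof -
    obtain k where k: "level e k < n" "n \<le> level e (Suc k)" using level_bracket[OF n] by blast
    have "real_of_rat (q n) \<le> real_of_rat (q (level e (Suc k)))" using inc k(2) by (simp add: incseq_def)
    moreover have "(1/2::real)^n \<le> (1/2)^(level e k + 1)" using k(1) by (intro power_decreasing) auto
    ultimately show ?thesis using far[of k] by (simp add: power_int_minus power_one_over inverse_eq_divide)
  qed
  with regains show False
    unfolding frequently_sequentially by (meson Suc_le_lessD)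
qed

theorem corollary5p5:
  shows "\<exists>x::real. speedable x \<and> \<not> regainingly_approximable x"
  using speedable_xlim not_regainingly_approximable_xlim by blast

end
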